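(* Let $(\mathcal{L},\mathcal{M},\hat{\mathcal{L}},\hat{\mathcal{M}})$ be a solution of the dDS hierarchy, i.e. the Lax-Sato equations $\frac{\partial K}{\partial t_{mn}}=\{H_{mn},K\}$ hold for $K\in\{\mathcal{L},\mathcal{M},\hat{\mathcal{L}},\hat{\mathcal{M}}\}$ and all $m+n\ge 1$, together with $\{\mathcal{L},\mathcal{M}\}=\{\hat{\mathcal{L}},\hat{\mathcal{M}}\}=1$. Then there exists a function $\tau_{dDS}(t)$ (the tau function) such that $$d\log\tau_{dDS}(t)=\sum_{m+n\ge 2}\big(v_{m+1}+\hat v_{n+1}\big)\,dt_{mn},$$ i.e. the 1-form on the right-hand side (in the variables $t_{mn}$, $m+n\ge 2$) is closed.
   Context: Variables: $t=(t_{mn})$ with $m,n\in\mathbb{N}=\{0,1,2,\dots\}$, $m+n\ge 1$, where $t_{10}\equiv z$ and $t_{01}\equiv\hat z$; $p$ is a complex parameter. Poisson bracket: $\{A,B\}=\frac{\partial A}{\partial p}\frac{\partial B}{\partial z}-\frac{\partial A}{\partial z}\frac{\partial B}{\partial p}$. $\mathcal{L}=p+\sum_{i\le 0}f_i(t)p^i$ and $\hat{\mathcal{L}}=\frac{u(t)}{p}+\sum_{i\ge 0}g_i(t)p^i$ are formal Laurent series in $p$ (coefficients depending on $t$). For a Laurent series, $(\cdot)_{>0}$ denotes the part with positive powers of $p$ and $(\cdot)_{\le 0}$ the part with non-positive powers. Hamiltonians: $H_{mn}=(\mathcal{L}^m)_{>0}+(\hat{\mathcal{L}}^n)_{\le 0}$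 (so $H_{m0}=(\mathcal{L}^m)_{>0}$, $H_{0n}=(\hat{\mathcal{L}}^n)_{\le 0}$). Orlov functions: $\mathcal{M}=\sum_{m+n\ge 2}m\,t_{mn}\mathcal{L}^{m-1}+z+\sum_{i=1}^{\infty}v_{i+1}\mathcal{L}^{-i-1}$, $\hat{\mathcal{M}}=\sum_{m+n\ge 2}n\,t_{mn}\hat{\mathcal{L}}^{n-1}+\hat z+\sum_{i=1}^{\infty}\hat v_{i+1}\hat{\mathcal{L}}^{-i-1}$, with coefficients $v_{i+1}(t),\hat v_{i+1}(t)$. Convention: $v_1=\hat v_1=0$ (there is no $\mathcal{L}^{-1}$, resp. $\hat{\mathcal{L}}^{-1}$, term). *)

theory Defs
  imports "HOL-Analysis.Analysis" "HOL-Computational_Algebra.Formal_Laurent_Series"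
begin

text \<open>A point of time space: t (m,n) = t_mn. The coordinate (0,0) is a dummy
  (it never occurs). z = t (1,0), zhat = t (0,1).
  We work on finitely supported times (only finitely many t_mn nonzero).\<close>

type_synonym times = "nat \<times> nat \<Rightarrow> complex"

definition Tdom :: "times set" where
  "Tdom = {t. finite {a. t a \<noteq> 0}}"

definition pd :: "nat \<times> nat \<Rightarrow> (times \<Rightarrow> complex) \<Rightarrow> times \<Rightarrow> complex" where
  "pd a f t = deriv (\<lambda>s. f (t(a := s))) (t a)"

definition pdifferentiable :: "(times \<Rightarrow> complex) \<Rightarrow> bool" where
  "pdifferentiable f \<longleftrightarrow>
     (\<forall>t\<in>Tdom. \<forall>a. (\<lambda>s. f (t(a := s))) field_differentiable (at (t a)))"

text \<open>Two representations are used: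
  * x-representation (for L, M): the fls variable X stands for p^{-1}, so a series
    with finitely many positive powers of p is a genuine fls in X;
    coefficient of p^k is the X-coefficient at index -k.
  * p-representation (for Lhat, Mhat): the fls variable X stands for p.\<close>

type_synonym tser = "times \<Rightarrow> complex fls"

definition dz :: "tser \<Rightarrow> times \<Rightarrow> complex fls" where
  "dz K t = Abs_fls (\<lambda>k. pd (1,0) (\<lambda>s. fls_nth (K s) k) t)"

text \<open>d/dp in x-representation (X = 1/p): d/dp = - X^2 d/dX.\<close>
definition dpx :: "complex fls \<Rightarrow> complex fls" where
  "dpx F = - (fls_X ^ 2 * fls_deriv F)"

definition PBx :: "tser \<Rightarrow> tser \<Rightarrow> times \<Rightarrow> complex fls" where
  "PBx A B t = dpx (A t) * dz B t - dz A t * dpx (B t)"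

definition PBp :: "tser \<Rightarrow> tser \<Rightarrow> times \<Rightarrow> complex fls" where
  "PBp A B t = fls_deriv (A t) * dz B t - dz A t * fls_deriv (B t)"

text \<open>Coefficient of p^k in H_mn = (L^m)_{>0} + (Lhat^n)_{<=0};
  Lx is L in x-representation, Lh is Lhat in p-representation.\<close>
definition Hcoef :: "tser \<Rightarrow> tser \<Rightarrow> nat \<times> nat \<Rightarrow> times \<Rightarrow> int \<Rightarrow> complex" where
  "Hcoef Lx Lh a t k =
     (if 0 < k then fls_nth (Lx t ^ fst a) (- k) else 0) +
     (if k \<le> 0 then fls_nth (Lh t ^ snd a) k else 0)"

definition Hx :: "tser \<Rightarrow> tser \<Rightarrow> nat \<times> nat \<Rightarrow> tser" where
  "Hx Lx Lh a t = Abs_fls (\<lambda>k. Hcoef Lx Lh a t (- k))"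

definition Hp :: "tser \<Rightarrow> tser \<Rightarrow> nat \<times> nat \<Rightarrow> tser" where
  "Hp Lx Lh a t = Abs_fls (\<lambda>k. Hcoef Lx Lh a t k)"

text \<open>The last sum is well defined since L^{-i-1} has subdegree i+1, so the coefficient
  at index k only receives contributions from 1 <= i < k.\<close>
definition Orlov :: "(nat \<times> nat \<Rightarrow> nat) \<Rightarrow> nat \<times> nat \<Rightarrow> tser \<Rightarrow> (nat \<Rightarrow> times \<Rightarrow> complex) \<Rightarrow> tser" where
  "Orlov sel c L w t =
     (\<Sum>a\<in>{a. 2 \<le> fst a + snd a \<and> t a \<noteq> 0}.
         fls_const (of_nat (sel a) * t a) * (L t) ^ (sel a - 1))
     + fls_const (t c)
     + Abs_fls (\<lambda>k. \<Sum>i\<in>{1..<nat k}. w (i+1) t * fls_nth (inverse ((L t) ^ (i+1))) k)"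

definition Mx :: "tser \<Rightarrow> (nat \<Rightarrow> times \<Rightarrow> complex) \<Rightarrow> tser" where
  "Mx L v = Orlov fst (1,0) L v"

definition Mp :: "tser \<Rightarrow> (nat \<Rightarrow> times \<Rightarrow> complex) \<Rightarrow> tser" where
  "Mp Lh vh = Orlov snd (0,1) Lh vh"

definition vconv :: "(nat \<Rightarrow> times \<Rightarrow> complex) \<Rightarrow> nat \<Rightarrow> times \<Rightarrow> complex" where
  "vconv w j = (if j = 1 then (\<lambda>_. 0) else w j)"

definition omega :: "(nat \<Rightarrow> times \<Rightarrow> complex) \<Rightarrow> (nat \<Rightarrow> times \<Rightarrow> complex) \<Rightarrow> nat \<times> nat \<Rightarrow> times \<Rightarrow> complex" where
  "omega v vh a t = vconv v (fst a + 1) t + vconv vh (snd a + 1) t"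

end

theory Submission
  imports Defs
begin

text \<open>For every flow t_b with m + n \<ge> 2 the Lax equations for L and M together with {L, M} = 1
  give dv_{j+1}/dt_b = res (L^j dH_b/dp), and likewise dvhat_{j+1}/dt_b = - res (Lhat^j dH_b/dp).
  Indeed \<partial>/\<partial>t_b - {H_b, _} annihilates L and M; applied to the Orlov expansion of M it yields the
  t_b-derivatives of the coefficients v_i, while {L, _} maps M to 1. Hence
  \<Sum>_i (dv_{i+1}/dt_b) L^{-i-1} agrees with (dH_b/dp) / (dL/dp) to high order, and pairing with
  L^j dL/dp picks out dv_{j+1}/dt_b, because res (L^k dL/dp) = 0 for k \<noteq> -1. Only finitely many
  coefficients enter, so M may be replaced by a finite truncation.

  Inserting H_a = (L^m)_{>0} + (Lhat^n)_{\<le>0}, the derivative of v_{m'+1} + vhat_{n'+1} in t_a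
  becomes a finite residue sum, which is symmetric in a = (m,n) and b = (m',n') because
  res (L^m' d(L^m)) = res (Lhat^n' d(Lhat^n)) = 0.\<close>

unbundle fps_syntax

section \<open>Coefficients vanishing below a given index\<close>

definition vanishes_below :: "int \<Rightarrow> 'a::zero fls \<Rightarrow> bool" where
  "vanishes_below N F \<longleftrightarrow> (\<forall>k<N. F $$ k = 0)"

lemma vanishes_below_mono: "vanishes_below N F \<Longrightarrow> M \<le> N \<Longrightarrow> vanishes_below M F"
  by (simp add: vanishes_below_def)

lemma vanishes_below_zero: "vanishes_below N 0"
  by (simp add: vanishes_below_def)

lemma vanishes_below_const: "vanishes_below 0 (fls_const c)"
  by (simp add: vanishes_below_def)

lemma vanishes_below_add:
  fixes F G :: "'a::monoid_add fls"
  shows "vanishes_below N F \<Longrightarrow> vanishes_below N G \<Longrightarrow> vanishes_below N (F + G)"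
  by (simp add: vanishes_below_def)

lemma vanishes_below_uminus:
  fixes F :: "'a::group_add fls"
  shows "vanishes_below N F \<Longrightarrow> vanishes_below N (- F)"
  by (simp add: vanishes_below_def)

lemma fls_times_nth_bounded:
  fixes F G :: "'a::comm_ring_1 fls"
  assumes "vanishes_below NF F" "vanishes_below NG G"
  shows "(F * G) $$ n = (\<Sum>i=NF..n-NG. F $$ i * G $$ (n - i))"
proof (cases "F = 0 \<or> G = 0")
  case True then show ?thesis by auto
next
  case False
  hence "F \<noteq> 0" and "G \<noteq> 0" by auto
  hence dF: "NF \<le> fls_subdegree F" and dG: "NG \<le> fls_subdegree G"
    using assms by (metis vanishes_below_def linorder_not_less nth_fls_subdegree_nonzero)+
  have "(F * G) $$ n = (\<Sum>i=fls_subdegree F..n - fls_subdegree G. F $$ i * G $$ (n - i))"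
    by (rule fls_times_nth(2))
  also have "\<dots> = (\<Sum>i=NF..n-NG. F $$ i * G $$ (n - i))"
  proof (rule sum.mono_neutral_left)
    show "{fls_subdegree F..n - fls_subdegree G} \<subseteq> {NF..n - NG}" using dF dG by auto
    show "\<forall>i\<in>{NF..n - NG} - {fls_subdegree F..n - fls_subdegree G}. F $$ i * G $$ (n - i) = 0"
      by (auto simp: not_le)
  qed simp
  finally show ?thesis .
qed

lemma vanishes_below_mult:
  fixes F G :: "'a::comm_ring_1 fls"
  shows "vanishes_below N F \<Longrightarrow> vanishes_below M G \<Longrightarrow> vanishes_below (N + M) (F * G)"
  unfolding vanishes_below_def[of "N + M"] by (auto simp: fls_times_nth_bounded)

lemma vanishes_below_power:
  fixes F :: "'a::comm_ring_1 fls"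
  shows "vanishes_below N F \<Longrightarrow> vanishes_below (int k * N) (F ^ k)"
proof (induction k)
  case 0 then show ?case by (simp add: vanishes_below_def)
next
  case (Suc k)
  then have "vanishes_below (N + int k * N) (F * F ^ k)" by (intro vanishes_below_mult) auto
  then show ?case by (simp add: algebra_simps)
qed

lemma vanishes_below_inverse:
  fixes F :: "'a::field fls"
  assumes "F $$ (-1) \<noteq> 0" "vanishes_below (-1) F"
  shows "vanishes_below 1 (inverse F)"
proof -
  have "fls_subdegree F = -1"
    using assms by (intro fls_subdegree_eqI) (auto simp: vanishes_below_def)
  then show ?thesis by (simp add: vanishes_below_def)
qed

lemma vanishes_below_fls_deriv:
  fixes F :: "'a::ring_1 fls"
  shows "vanishes_below N F \<Longrightarrow> vanishes_below (N - 1) (fls_deriv F)"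
  by (simp add: vanishes_below_def)

lemma dpx_nth: "dpx F $$ k = - (of_int (k - 1) * F $$ (k - 1))"
  by (simp add: dpx_def fls_X_power_times_conv_shift)

lemma vanishes_below_dpx: "vanishes_below N F \<Longrightarrow> vanishes_below (N + 1) (dpx F)"
  by (simp add: vanishes_below_def dpx_nth)

section \<open>Coefficientwise derivatives along a coordinate line\<close>

text \<open>The lower bound on the coefficients is required uniformly along the line, so that each
  coefficient of a product is the same finite sum of products of coefficients at every point.\<close>

definition bounded_along :: "nat \<times> nat \<Rightarrow> times \<Rightarrow> tser \<Rightarrow> bool" where
  "bounded_along a t K \<longleftrightarrow> (\<exists>N. \<forall>s. vanishes_below N (K (t(a := s))))"

definition smooth_along :: "nat \<times> nat \<Rightarrow> times \<Rightarrow> tser \<Rightarrow> bool" where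
  "smooth_along a t K \<longleftrightarrow>
     (\<forall>k. (\<lambda>s. K (t(a := s)) $$ k) field_differentiable (at (t a))) \<and> bounded_along a t K"

definition pd_fls :: "nat \<times> nat \<Rightarrow> tser \<Rightarrow> times \<Rightarrow> complex fls" where
  "pd_fls a K t = Abs_fls (\<lambda>k. deriv (\<lambda>s. K (t(a := s)) $$ k) (t a))"

lemma dz_eq_pd_fls: "dz K t = pd_fls (1,0) K t"
  by (simp add: dz_def pd_fls_def pd_def)

lemma pd_fls_eqI: "(\<And>k. pd a (\<lambda>s. K s $$ k) t = G $$ k) \<Longrightarrow> pd_fls a K t = G"
  unfolding pd_fls_def pd_def by (simp add: fls_nth_inverse)

lemma pd_fls_cong: "(\<And>s. K1 (t(a := s)) = K2 (t(a := s))) \<Longrightarrow> pd_fls a K1 t = pd_fls a K2 t"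
  by (simp add: pd_fls_def)

lemma pd_fls_nth_bounded:
  assumes "\<forall>s. vanishes_below N (K (t(a := s)))"
  shows "pd_fls a K t $$ k = deriv (\<lambda>s. K (t(a := s)) $$ k) (t a)"
  unfolding pd_fls_def
proof (rule nth_Abs_fls_lower_bound, intro allI impI)
  fix n assume "n < N"
  then have "(\<lambda>s. K (t(a := s)) $$ n) = (\<lambda>s. 0)" using assms by (auto simp: vanishes_below_def)
  then show "deriv (\<lambda>s. K (t(a := s)) $$ n) (t a) = 0" by simp
qed

lemma pd_fls_nth: "bounded_along a t K \<Longrightarrow> pd_fls a K t $$ k = deriv (\<lambda>s. K (t(a := s)) $$ k) (t a)"
  unfolding bounded_along_def using pd_fls_nth_bounded by blast

lemma vanishes_below_pd_fls: "\<forall>s. vanishes_below N (K (t(a := s))) \<Longrightarrow> vanishes_below N (pd_fls a K t)"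
  using pd_fls_nth_bounded by (simp add: vanishes_below_def)

lemma vanishes_below_pd_fls_diff:
  assumes "bounded_along a t K1" "bounded_along a t K2"
    and "\<forall>s. vanishes_below N (K1 (t(a := s)) - K2 (t(a := s)))"
  shows "vanishes_below N (pd_fls a K1 t - pd_fls a K2 t)"
  unfolding vanishes_below_def
proof (intro allI impI)
  fix k assume "k < N"
  then have "(\<lambda>s. K1 (t(a := s)) $$ k) = (\<lambda>s. K2 (t(a := s)) $$ k)"
    using assms(3) by (auto simp: vanishes_below_def)
  then show "(pd_fls a K1 t - pd_fls a K2 t) $$ k = 0"
    by (simp add: pd_fls_nth[OF assms(1)] pd_fls_nth[OF assms(2)])
qed

lemma smooth_along_bounded: "smooth_along a t K \<Longrightarrow> bounded_along a t K"
  by (simp add: smooth_along_def)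

lemma smooth_along_has_derivative:
  "smooth_along a t K \<Longrightarrow>
     ((\<lambda>s. K (t(a := s)) $$ k) has_field_derivative deriv (\<lambda>s. K (t(a := s)) $$ k) (t a)) (at (t a))"
  by (simp add: smooth_along_def DERIV_deriv_iff_field_differentiable)

lemma bounded_along_add:
  "bounded_along a t A \<Longrightarrow> bounded_along a t B \<Longrightarrow> bounded_along a t (\<lambda>s. A s + B s)"
  unfolding bounded_along_def
  by (metis vanishes_below_add vanishes_below_mono min.cobounded1 min.cobounded2)

lemma bounded_along_close:
  assumes "bounded_along a t K2" "\<forall>s. vanishes_below N (K1 (t(a := s)) - K2 (t(a := s)))"
  shows "bounded_along a t K1"
proof -
  have "bounded_along a t (\<lambda>s'. (K1 s' - K2 s') + K2 s')"
    by (rule bounded_along_add) (use assms in \<open>auto simp: bounded_along_def\<close>)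
  then show ?thesis by simp
qed

lemma bounded_along_mult:
  "bounded_along a t A \<Longrightarrow> bounded_along a t B \<Longrightarrow> bounded_along a t (\<lambda>s. A s * B s)"
  unfolding bounded_along_def by (meson vanishes_below_mult)

lemma nth_mult_along:
  fixes A B :: tser
  assumes "\<forall>s. vanishes_below NA (A (t(a := s)))" "\<forall>s. vanishes_below NB (B (t(a := s)))"
  shows "(\<lambda>s. (A (t(a := s)) * B (t(a := s))) $$ n) =
           (\<lambda>s. \<Sum>i=NA..n-NB. A (t(a := s)) $$ i * B (t(a := s)) $$ (n - i))"
  by (intro ext fls_times_nth_bounded) (use assms in auto)

lemma smooth_along_mult:
  assumes A: "smooth_along a t A" and B: "smooth_along a t B"
  shows "smooth_along a t (\<lambda>s. A s * B s)"
proof -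
  obtain NA NB where NA: "\<forall>s. vanishes_below NA (A (t(a := s)))"
    and NB: "\<forall>s. vanishes_below NB (B (t(a := s)))"
    using A B by (auto simp: smooth_along_def bounded_along_def)
  have "(\<lambda>s. (A (t(a := s)) * B (t(a := s))) $$ k) field_differentiable at (t a)" for k
    unfolding nth_mult_along[OF NA NB]
    by (intro field_differentiable_sum field_differentiable_mult)
      (use A B in \<open>auto simp: smooth_along_def\<close>)
  then show ?thesis using A B by (simp add: smooth_along_def bounded_along_mult smooth_along_bounded)
qed

lemma pd_fls_mult:
  assumes A: "smooth_along a t A" and B: "smooth_along a t B"
  shows "pd_fls a (\<lambda>s. A s * B s) t = pd_fls a A t * B t + A t * pd_fls a B t"
proof (rule fls_eqI)
  fix n
  obtain NA NB where NA: "\<forall>s. vanishes_below NA (A (t(a := s)))"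
    and NB: "\<forall>s. vanishes_below NB (B (t(a := s)))"
    using A B by (auto simp: smooth_along_def bounded_along_def)
  have lA: "vanishes_below NA (A t)" and lB: "vanishes_below NB (B t)"
    using NA[rule_format, of "t a"] NB[rule_format, of "t a"] by simp_all
  let ?dA = "\<lambda>i. deriv (\<lambda>s. A (t(a := s)) $$ i) (t a)"
  let ?dB = "\<lambda>i. deriv (\<lambda>s. B (t(a := s)) $$ i) (t a)"
  have "((\<lambda>s. \<Sum>i=NA..n-NB. A (t(a := s)) $$ i * B (t(a := s)) $$ (n - i)) has_field_derivative
          (\<Sum>i=NA..n-NB. ?dA i * B t $$ (n - i) + A t $$ i * ?dB (n - i))) (at (t a))"
    by (intro DERIV_sum DERIV_cong[OF DERIV_mult[OF smooth_along_has_derivative[OF A]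
          smooth_along_has_derivative[OF B]]]) (simp add: algebra_simps)
  then have "deriv (\<lambda>s. (A (t(a := s)) * B (t(a := s))) $$ n) (t a) =
      (\<Sum>i=NA..n-NB. ?dA i * B t $$ (n - i) + A t $$ i * ?dB (n - i))"
    unfolding nth_mult_along[OF NA NB] by (rule DERIV_imp_deriv)
  then have "pd_fls a (\<lambda>s. A s * B s) t $$ n =
      (\<Sum>i=NA..n-NB. ?dA i * B t $$ (n - i) + A t $$ i * ?dB (n - i))"
    by (simp add: pd_fls_nth bounded_along_mult smooth_along_bounded A B)
  also have "\<dots> = (pd_fls a A t * B t + A t * pd_fls a B t) $$ n"
    by (simp add: fls_times_nth_bounded[OF vanishes_below_pd_fls[OF NA] lB]
        fls_times_nth_bounded[OF lA vanishes_below_pd_fls[OF NB]] sum.distrib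
        pd_fls_nth[OF smooth_along_bounded[OF A]] pd_fls_nth[OF smooth_along_bounded[OF B]])
  finally show "pd_fls a (\<lambda>s. A s * B s) t $$ n = (pd_fls a A t * B t + A t * pd_fls a B t) $$ n" .
qed

lemma smooth_along_add:
  "smooth_along a t A \<Longrightarrow> smooth_along a t B \<Longrightarrow> smooth_along a t (\<lambda>s. A s + B s)"
  unfolding smooth_along_def by (auto intro: field_differentiable_add bounded_along_add)

lemma pd_fls_add:
  assumes A: "smooth_along a t A" and B: "smooth_along a t B"
  shows "pd_fls a (\<lambda>s. A s + B s) t = pd_fls a A t + pd_fls a B t"
proof (rule fls_eqI)
  fix n
  have "pd_fls a (\<lambda>s. A s + B s) t $$ n = deriv (\<lambda>s. A (t(a := s)) $$ n + B (t(a := s)) $$ n) (t a)"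
    using pd_fls_nth[OF bounded_along_add[OF smooth_along_bounded[OF A] smooth_along_bounded[OF B]]]
    by simp
  also have "\<dots> = deriv (\<lambda>s. A (t(a := s)) $$ n) (t a) + deriv (\<lambda>s. B (t(a := s)) $$ n) (t a)"
    by (rule deriv_add) (use A B in \<open>auto simp: smooth_along_def\<close>)
  finally show "pd_fls a (\<lambda>s. A s + B s) t $$ n = (pd_fls a A t + pd_fls a B t) $$ n"
    by (simp add: pd_fls_nth smooth_along_bounded A B)
qed

lemma smooth_along_sum:
  "finite I \<Longrightarrow> (\<And>i. i \<in> I \<Longrightarrow> smooth_along a t (f i)) \<Longrightarrow> smooth_along a t (\<lambda>s. \<Sum>i\<in>I. f i s)"
proof (induction I rule: finite_induct)
  case empty
  then show ?case by (simp add: smooth_along_def bounded_along_def vanishes_below_def)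
next
  case (insert x F)
  then show ?case by (simp add: smooth_along_add)
qed

lemma pd_fls_sum:
  "finite I \<Longrightarrow> (\<And>i. i \<in> I \<Longrightarrow> smooth_along a t (f i)) \<Longrightarrow>
     pd_fls a (\<lambda>s. \<Sum>i\<in>I. f i s) t = (\<Sum>i\<in>I. pd_fls a (f i) t)"
proof (induction I rule: finite_induct)
  case empty
  have "Abs_fls (\<lambda>k. 0::complex) = 0"
    by (rule fls_eqI) (simp add: nth_Abs_fls_lower_bound[of 0])
  then show ?case by (simp add: pd_fls_def)
next
  case (insert x F)
  then show ?case by (simp add: pd_fls_add smooth_along_sum)
qed

lemma pd_fls_const: "pd_fls a (\<lambda>s. fls_const (g s)) t = fls_const (deriv (\<lambda>s. g (t(a := s))) (t a))"
proof (rule fls_eqI)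
  fix n
  have "\<forall>s. vanishes_below 0 (fls_const (g (t(a := s))))" by (simp add: vanishes_below_const)
  then have "pd_fls a (\<lambda>s. fls_const (g s)) t $$ n = deriv (\<lambda>s. fls_const (g (t(a := s))) $$ n) (t a)"
    by (rule pd_fls_nth_bounded)
  also have "\<dots> = fls_const (deriv (\<lambda>s. g (t(a := s))) (t a)) $$ n"
  proof (cases "n = 0")
    case True
    then have "(\<lambda>s. fls_const (g (t(a := s))) $$ n) = (\<lambda>s. g (t(a := s)))" by simp
    then show ?thesis using True by (simp only: True fls_const_nth if_True refl)
  qed simp
  finally show "pd_fls a (\<lambda>s. fls_const (g s)) t $$ n = fls_const (deriv (\<lambda>s. g (t(a := s))) (t a)) $$ n" .
qed

lemma smooth_along_const:
  assumes "(\<lambda>s. g (t(a := s))) field_differentiable (at (t a))"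
  shows "smooth_along a t (\<lambda>s. fls_const (g s))"
proof -
  have "(\<lambda>s. fls_const (g (t(a := s))) $$ k) field_differentiable (at (t a))" for k
    by (cases "k = 0") (simp_all add: assms)
  then show ?thesis
    unfolding smooth_along_def bounded_along_def by (auto intro!: exI[of _ 0] simp: vanishes_below_const)
qed

lemma smooth_along_power: "smooth_along a t A \<Longrightarrow> smooth_along a t (\<lambda>s. A s ^ n)"
proof (induction n)
  case 0
  then show ?case using smooth_along_const[of "\<lambda>_. 1" t a] by (simp add: fls_const_1)
next
  case (Suc n)
  then show ?case using smooth_along_mult[of a t A "\<lambda>s. A s ^ n"] by simp
qed

lemma fls_inverse_nth_succ:
  fixes L :: "'a::field fls"
  assumes L: "L $$ (-1) \<noteq> 0" "vanishes_below (-1) L"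
  shows "inverse L $$ (int n + 1) =
           ((if n = 0 then 1 else 0) - (\<Sum>i=0..int n - 1. L $$ i * inverse L $$ (int n - i))) / L $$ (-1)"
proof -
  have "L \<noteq> 0" using L by (metis fls_nonzeroI)
  then have "(if n = 0 then 1 else 0) = (L * inverse L) $$ int n" by simp
  also have "\<dots> = (\<Sum>i=-1..int n - 1. L $$ i * inverse L $$ (int n - i))"
    by (rule fls_times_nth_bounded[OF L(2) vanishes_below_inverse[OF L]])
  also have "\<dots> = L $$ (-1) * inverse L $$ (int n + 1) + (\<Sum>i=0..int n - 1. L $$ i * inverse L $$ (int n - i))"
  proof -
    have "{-1..int n - 1} = insert (-1) {0..int n - 1}" by auto
    then show ?thesis by simp
  qed
  finally show ?thesis using L(1) by (simp add: field_simps)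
qed

lemma smooth_along_inverse:
  assumes L: "smooth_along a t L"
    and L_pole: "\<forall>s. L (t(a := s)) $$ (-1) \<noteq> 0 \<and> vanishes_below (-1) (L (t(a := s)))"
  shows "smooth_along a t (\<lambda>s. inverse (L s))"
proof -
  define I where "I s = inverse (L (t(a := s)))" for s
  have I_vanishes: "vanishes_below 1 (I s)" for s unfolding I_def using L_pole vanishes_below_inverse by blast
  have dL: "(\<lambda>s. L (t(a := s)) $$ k) field_differentiable at (t a)" for k
    using L by (simp add: smooth_along_def)
  have "(\<lambda>s. I s $$ k) field_differentiable at (t a)" if "k \<le> int m" for k m
    using that
  proof (induction m arbitrary: k)
    case 0
    then have "(\<lambda>s. I s $$ k) = (\<lambda>s. 0)" using I_vanishes by (auto simp: vanishes_below_def)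
    then show ?case by simp
  next
    case (Suc m)
    show ?case
    proof (cases "k \<le> int m")
      case True then show ?thesis using Suc by auto
    next
      case False
      then have k: "k = int m + 1" using Suc.prems by auto
      have "I s $$ k = ((if m = 0 then 1 else 0)
          - (\<Sum>i=0..int m - 1. L (t(a := s)) $$ i * I s $$ (int m - i))) / L (t(a := s)) $$ (-1)" for s
        unfolding k I_def by (rule fls_inverse_nth_succ) (use L_pole in auto)
      then have eq: "(\<lambda>s. I s $$ k) = (\<lambda>s. ((if m = 0 then 1 else 0)
          - (\<Sum>i=0..int m - 1. L (t(a := s)) $$ i * I s $$ (int m - i))) / L (t(a := s)) $$ (-1))"
        by (rule ext)
      have IH: "(\<lambda>s. I s $$ (int m - i)) field_differentiable at (t a)" if "i \<in> {0..int m - 1}" for i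
        using Suc.IH that by auto
      have "L t $$ (-1) \<noteq> 0" using L_pole[rule_format, of "t a"] by simp
      then show ?thesis unfolding eq
        by (intro field_differentiable_divide field_differentiable_diff field_differentiable_sum
            field_differentiable_mult dL IH) auto
    qed
  qed
  from this[of k "nat k" for k] have "(\<lambda>s. I s $$ k) field_differentiable at (t a)" for k
    by simp
  moreover have "bounded_along a t (\<lambda>s. inverse (L s))"
    unfolding bounded_along_def using I_vanishes I_def by auto
  ultimately show ?thesis by (simp add: smooth_along_def I_def)
qed

section \<open>Derivations of Laurent series\<close>

definition fls_derivation :: "('a::field fls \<Rightarrow> 'a fls) \<Rightarrow> bool" where
  "fls_derivation P \<longleftrightarrow>
     (\<forall>x y. P (x * y) = P x * y + x * P y) \<and> (\<forall>x y. P (x + y) = P x + P y) \<and> (\<forall>c. P (fls_const c) = 0)"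

lemma fls_derivation_mult: "fls_derivation P \<Longrightarrow> P (x * y) = P x * y + x * P y"
  by (simp add: fls_derivation_def)

lemma fls_derivation_add: "fls_derivation P \<Longrightarrow> P (x + y) = P x + P y"
  by (simp add: fls_derivation_def)

lemma fls_derivation_const: "fls_derivation P \<Longrightarrow> P (fls_const c) = 0"
  by (simp add: fls_derivation_def)

lemma fls_derivation_one: "fls_derivation P \<Longrightarrow> P 1 = 0"
  using fls_derivation_const[of P 1] by (simp add: fls_const_1)

lemma fls_derivation_zero: "fls_derivation P \<Longrightarrow> P 0 = 0"
  using fls_derivation_const[of P 0] by simp

lemma fls_derivation_diff: "fls_derivation P \<Longrightarrow> P (x - y) = P x - P y"
  using fls_derivation_add[of P "x - y" y] by (simp add: algebra_simps)

lemma fls_derivation_sum: "fls_derivation P \<Longrightarrow> P (\<Sum>i\<in>I. f i) = (\<Sum>i\<in>I. P (f i))"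
  by (induction I rule: infinite_finite_induct) (auto simp: fls_derivation_zero fls_derivation_add)

lemma fls_derivation_power: "fls_derivation P \<Longrightarrow> P (x ^ Suc n) = of_nat (Suc n) * x ^ n * P x"
proof (induction n)
  case 0 then show ?case by (simp add: fls_derivation_mult fls_derivation_one)
next
  case (Suc n)
  have "P (x ^ Suc (Suc n)) = P x * x ^ Suc n + x * (of_nat (Suc n) * x ^ n * P x)"
    using Suc by (simp add: fls_derivation_mult)
  also have "\<dots> = of_nat (Suc (Suc n)) * x ^ Suc n * P x" by (simp add: algebra_simps)
  finally show ?case .
qed

lemma fls_derivation_inverse:
  assumes "fls_derivation P" "x \<noteq> 0"
  shows "P (inverse x) = - (inverse x * inverse x) * P x"
proof -
  have "0 = P (x * inverse x)" using assms by (simp add: fls_derivation_one)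
  also have "\<dots> = P x * inverse x + x * P (inverse x)" using assms(1) by (rule fls_derivation_mult)
  finally have "x * P (inverse x) = - P x * inverse x" by (simp add: eq_neg_iff_add_eq_0 add.commute)
  then have "P (inverse x) = inverse x * (- P x * inverse x)" using assms(2)
    by (metis (no_types) mult.assoc mult.left_commute mult.right_neutral right_inverse)
  then show ?thesis by (simp add: algebra_simps)
qed

lemma vanishes_below_derivation_diff:
  assumes "fls_derivation P" "\<forall>N F. vanishes_below N F \<longrightarrow> vanishes_below (N - 1) (P F)"
    and "vanishes_below N (x - y)"
  shows "vanishes_below (N - 1) (P x - P y)"
  using assms by (metis fls_derivation_diff)

text \<open>In the applications P is d/dp and r is the index of the residue, which every derivative
  lacks; the lemmas below are the formal counterparts of res (L^k dL/dp) = 0 for k \<noteq> -1.\<close>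

lemma power_mult_derivation_coeff:
  fixes P :: "'a::field_char_0 fls \<Rightarrow> 'a fls"
  assumes "fls_derivation P" "\<forall>F. P F $$ r = 0"
  shows "(x ^ k * P x) $$ r = 0"
proof -
  have "P (x ^ Suc k) = fls_const (of_nat (Suc k)) * (x ^ k * P x)"
    using fls_derivation_power[OF assms(1), of x k] by (simp only: fls_of_nat mult.assoc)
  then have "of_nat (Suc k) * (x ^ k * P x) $$ r = 0"
    using assms(2) by (metis fls_mult_const_nth)
  then show ?thesis by (metis mult_eq_0_iff of_nat_neq_0)
qed

lemma power_mult_derivation_power_coeff:
  fixes P :: "'a::field_char_0 fls \<Rightarrow> 'a fls"
  assumes "fls_derivation P" "\<forall>F. P F $$ r = 0"
  shows "(x ^ a * P (x ^ b)) $$ r = 0"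
proof (cases b)
  case 0 then show ?thesis using fls_derivation_one[OF assms(1)] by simp
next
  case (Suc k)
  have "x ^ a * P (x ^ b) = fls_const (of_nat (Suc k)) * (x ^ (a + k) * P x)"
    using fls_derivation_power[OF assms(1), of x k] Suc by (simp add: fls_of_nat power_add algebra_simps)
  then show ?thesis using power_mult_derivation_coeff[OF assms] by simp
qed

lemma inverse_power_mult_derivation_coeff:
  fixes P :: "'a::field_char_0 fls \<Rightarrow> 'a fls"
  assumes "fls_derivation P" "\<forall>F. P F $$ r = 0" "x \<noteq> 0" "2 \<le> m"
  shows "(inverse x ^ m * P x) $$ r = 0"
proof -
  obtain k where m: "m = Suc (Suc k)" using assms(4) by (metis add_2_eq_Suc le_Suc_ex)
  have "P (inverse x ^ Suc k) = of_nat (Suc k) * inverse x ^ k * P (inverse x)"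
    using fls_derivation_power[OF assms(1)] by blast
  also have "\<dots> = - (fls_const (of_nat (Suc k)) * (inverse x ^ m * P x))"
    using fls_derivation_inverse[OF assms(1,3)] by (simp only: fls_of_nat m) (simp add: algebra_simps)
  finally have "of_nat (Suc k) * (inverse x ^ m * P x) $$ r = 0"
    using assms(2) by (metis fls_uminus_nth fls_mult_const_nth neg_equal_0_iff_equal)
  then show ?thesis by (metis mult_eq_0_iff of_nat_neq_0)
qed

lemma inverse_power_mult_power:
  fixes x :: "'a::field fls"
  assumes "x \<noteq> 0"
  shows "inverse x ^ (i + 1) * x ^ j = (if i < j then x ^ (j - i - 1) else inverse x ^ (i + 1 - j))"
proof (cases "i < j")
  case True
  then have "x ^ j = x ^ (i + 1) * x ^ (j - i - 1)"
    using power_add[of x "i + 1" "j - i - 1"] by simp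
  moreover have "inverse x ^ (i + 1) * x ^ (i + 1) = 1"
    by (metis assms left_inverse power_mult_distrib power_one)
  ultimately show ?thesis using True by (simp only: mult.assoc[symmetric] if_True) simp
next
  case False
  then have "inverse x ^ (i + 1) = inverse x ^ (i + 1 - j) * inverse x ^ j"
    using power_add[of "inverse x" "i + 1 - j" j] by simp
  moreover have "inverse x ^ j * x ^ j = 1"
    by (metis assms left_inverse power_mult_distrib power_one)
  ultimately show ?thesis using False by (simp add: mult.assoc)
qed

lemma inverse_power_mult_power_derivation_coeff:
  fixes P :: "'a::field_char_0 fls \<Rightarrow> 'a fls"
  assumes "fls_derivation P" "\<forall>F. P F $$ r = 0" "x \<noteq> 0"
  shows "(inverse x ^ (i + 1) * x ^ j * P x) $$ r = (if i = j then (inverse x * P x) $$ r else 0)"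
  unfolding inverse_power_mult_power[OF assms(3)]
proof -
  consider "i < j" | "i = j" | "j < i" by linarith
  then show "((if i < j then x ^ (j - i - 1) else inverse x ^ (i + 1 - j)) * P x) $$ r =
      (if i = j then (inverse x * P x) $$ r else 0)"
  proof cases
    case 1 then show ?thesis using power_mult_derivation_coeff[OF assms(1,2)] by simp
  next
    case 2 then show ?thesis by simp
  next
    case 3
    then have "2 \<le> i + 1 - j" by simp
    with 3 show ?thesis using inverse_power_mult_derivation_coeff[OF assms] by simp
  qed
qed

section \<open>A first-order operator in the times\<close>

text \<open>Both
  \<partial>/\<partial>t_b - {H, _} and {L, _} have this shape, and for fixed coefficients it is a derivation.\<close>

definition smooth_bz :: "nat \<times> nat \<Rightarrow> times \<Rightarrow> tser \<Rightarrow> bool" where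
  "smooth_bz b t K \<longleftrightarrow> smooth_along b t K \<and> smooth_along (1,0) t K"

definition lax_op :: "nat \<times> nat \<Rightarrow> times \<Rightarrow> complex fls \<Rightarrow> complex fls \<Rightarrow> complex fls \<Rightarrow>
    (complex fls \<Rightarrow> complex fls) \<Rightarrow> tser \<Rightarrow> complex fls" where
  "lax_op b t \<alpha> \<beta> \<gamma> P K = \<alpha> * pd_fls b K t + \<beta> * pd_fls (1,0) K t + \<gamma> * P (K t)"

lemma smooth_bz_mult: "smooth_bz b t A \<Longrightarrow> smooth_bz b t B \<Longrightarrow> smooth_bz b t (\<lambda>s. A s * B s)"
  by (simp add: smooth_bz_def smooth_along_mult)

lemma smooth_bz_add: "smooth_bz b t A \<Longrightarrow> smooth_bz b t B \<Longrightarrow> smooth_bz b t (\<lambda>s. A s + B s)"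
  by (simp add: smooth_bz_def smooth_along_add)

lemma smooth_bz_sum:
  "finite I \<Longrightarrow> (\<And>i. i \<in> I \<Longrightarrow> smooth_bz b t (f i)) \<Longrightarrow> smooth_bz b t (\<lambda>s. \<Sum>i\<in>I. f i s)"
  by (simp add: smooth_bz_def smooth_along_sum)

lemma smooth_bz_power: "smooth_bz b t A \<Longrightarrow> smooth_bz b t (\<lambda>s. A s ^ n)"
  by (simp add: smooth_bz_def smooth_along_power)

lemma lax_op_mult:
  "fls_derivation P \<Longrightarrow> smooth_bz b t A \<Longrightarrow> smooth_bz b t B \<Longrightarrow>
     lax_op b t \<alpha> \<beta> \<gamma> P (\<lambda>s. A s * B s) = lax_op b t \<alpha> \<beta> \<gamma> P A * B t + A t * lax_op b t \<alpha> \<beta> \<gamma> P B"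
  unfolding lax_op_def smooth_bz_def by (simp add: pd_fls_mult fls_derivation_mult algebra_simps)

lemma lax_op_add:
  "fls_derivation P \<Longrightarrow> smooth_bz b t A \<Longrightarrow> smooth_bz b t B \<Longrightarrow>
     lax_op b t \<alpha> \<beta> \<gamma> P (\<lambda>s. A s + B s) = lax_op b t \<alpha> \<beta> \<gamma> P A + lax_op b t \<alpha> \<beta> \<gamma> P B"
  unfolding lax_op_def smooth_bz_def by (simp add: pd_fls_add fls_derivation_add algebra_simps)

lemma lax_op_sum:
  "fls_derivation P \<Longrightarrow> finite I \<Longrightarrow> (\<And>i. i \<in> I \<Longrightarrow> smooth_bz b t (f i)) \<Longrightarrow>
     lax_op b t \<alpha> \<beta> \<gamma> P (\<lambda>s. \<Sum>i\<in>I. f i s) = (\<Sum>i\<in>I. lax_op b t \<alpha> \<beta> \<gamma> P (f i))"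
  unfolding lax_op_def smooth_bz_def
  by (simp add: pd_fls_sum fls_derivation_sum sum_distrib_left sum.distrib)

lemma lax_op_const:
  "fls_derivation P \<Longrightarrow>
     lax_op b t \<alpha> \<beta> \<gamma> P (\<lambda>s. fls_const (g s)) =
       \<alpha> * fls_const (deriv (\<lambda>s. g (t(b := s))) (t b)) + \<beta> * fls_const (deriv (\<lambda>s. g (t((1,0) := s))) (t (1,0)))"
  unfolding lax_op_def by (simp add: pd_fls_const fls_derivation_const)

lemma lax_op_one: "fls_derivation P \<Longrightarrow> lax_op b t \<alpha> \<beta> \<gamma> P (\<lambda>s. 1) = 0"
  using lax_op_const[of P b t \<alpha> \<beta> \<gamma> "\<lambda>s. 1"] by (simp add: fls_const_1)

lemma lax_op_cong:
  assumes "\<And>s. K1 (t(b := s)) = K2 (t(b := s))" "\<And>s. K1 (t((1,0) := s)) = K2 (t((1,0) := s))"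
  shows "lax_op b t \<alpha> \<beta> \<gamma> P K1 = lax_op b t \<alpha> \<beta> \<gamma> P K2"
proof -
  have "K1 t = K2 t" using assms(1)[of "t b"] by simp
  then show ?thesis
    unfolding lax_op_def
    using pd_fls_cong[of K1 t b K2, OF assms(1)] pd_fls_cong[of K1 t "(1,0)" K2, OF assms(2)] by simp
qed

lemma lax_op_power:
  assumes "fls_derivation P" "smooth_bz b t L" "lax_op b t \<alpha> \<beta> \<gamma> P L = 0"
  shows "lax_op b t \<alpha> \<beta> \<gamma> P (\<lambda>s. L s ^ n) = 0"
proof (induction n)
  case 0
  then show ?case using lax_op_one[OF assms(1)] by simp
next
  case (Suc n)
  then show ?case using lax_op_mult[OF assms(1,2) smooth_bz_power[OF assms(2)]] assms(3) by simp
qed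

lemma lax_op_inverse:
  assumes P: "fls_derivation P" and L: "smooth_bz b t L" "smooth_bz b t (\<lambda>s. inverse (L s))"
    and L_annihilated: "lax_op b t \<alpha> \<beta> \<gamma> P L = 0"
    and L_nonzero: "\<forall>s. L (t(b := s)) \<noteq> 0" "\<forall>s. L (t((1,0) := s)) \<noteq> 0"
  shows "lax_op b t \<alpha> \<beta> \<gamma> P (\<lambda>s. inverse (L s)) = 0"
proof -
  have "lax_op b t \<alpha> \<beta> \<gamma> P (\<lambda>s. L s * inverse (L s)) = lax_op b t \<alpha> \<beta> \<gamma> P (\<lambda>s. 1)"
    by (rule lax_op_cong) (use L_nonzero in auto)
  then have "L t * lax_op b t \<alpha> \<beta> \<gamma> P (\<lambda>s. inverse (L s)) = 0"
    using lax_op_mult[OF P L] L_annihilated lax_op_one[OF P] by simp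
  moreover have "L t \<noteq> 0" using L_nonzero(1)[rule_format, of "t b"] by simp
  ultimately show ?thesis by simp
qed

lemma deriv_coordinate: "deriv (\<lambda>s. C * (t(d := s)) a) (t d) = (if a = d then C else (0::complex))"
proof (cases "a = d")
  case True
  then have "(\<lambda>s. C * (t(d := s)) a) = (\<lambda>s. C * s)" by auto
  then show ?thesis using True by simp
next
  case False
  then have "(\<lambda>s. C * (t(d := s)) a) = (\<lambda>s. C * t a)" by auto
  then show ?thesis using False by simp
qed

lemma coordinate_differentiable: "(\<lambda>s. C * (t(d := s)) a) field_differentiable (at x)"
proof (cases "a = d")
  case True
  then have "(\<lambda>s. C * (t(d := s)) a) = (\<lambda>s. C * s)" by auto
  then show ?thesis by (simp add: field_differentiable_mult field_differentiable_ident)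
next
  case False
  then have "(\<lambda>s. C * (t(d := s)) a) = (\<lambda>s. C * t a)" by auto
  then show ?thesis by simp
qed

lemma vanishes_below_lin_comb:
  fixes \<alpha> \<beta> \<gamma> d1 d2 d3 :: "'a::comm_ring_1 fls"
  assumes "vanishes_below A \<alpha>" "vanishes_below B \<beta>" "vanishes_below C \<gamma>"
    and "vanishes_below X d1" "vanishes_below X d2" "vanishes_below (X - 1) d3"
  shows "vanishes_below (X + min A (min B C) - 1) (\<alpha> * d1 + \<beta> * d2 + \<gamma> * d3)"
proof -
  have "vanishes_below (A + X) (\<alpha> * d1)" "vanishes_below (B + X) (\<beta> * d2)"
    "vanishes_below (C + (X - 1)) (\<gamma> * d3)"
    using assms by (auto intro: vanishes_below_mult)
  then show ?thesis by (intro vanishes_below_add) (auto elim: vanishes_below_mono)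
qed

section \<open>Truncations of Orlov series\<close>

definition Orlov_trunc ::
    "(nat \<times> nat \<Rightarrow> nat) \<Rightarrow> nat \<times> nat \<Rightarrow> tser \<Rightarrow> (nat \<Rightarrow> times \<Rightarrow> complex) \<Rightarrow> (nat \<times> nat) set \<Rightarrow> nat \<Rightarrow> tser" where
  "Orlov_trunc sel c L w A N s =
     (\<Sum>a\<in>A. fls_const (of_nat (sel a) * s a) * L s ^ (sel a - 1)) + fls_const (s c)
     + (\<Sum>i\<in>{1..N}. fls_const (w (i + 1) s) * inverse (L s) ^ (i + 1))"

lemma sum_power_nth_truncate:
  fixes X :: "'a::comm_ring_1 fls"
  assumes "vanishes_below 1 X" "k < int N + 2"
  shows "(\<Sum>i\<in>{1..N}. fls_const (f i) * X ^ (i + 1)) $$ k = (\<Sum>i\<in>{1..<nat k}. f i * (X ^ (i + 1)) $$ k)"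
proof -
  have "(\<Sum>i\<in>{1..N}. fls_const (f i) * X ^ (i + 1)) $$ k = (\<Sum>i\<in>{1..N}. f i * (X ^ (i + 1)) $$ k)"
    by (simp add: fls_nth_sum)
  also have "\<dots> = (\<Sum>i\<in>{1..<nat k}. f i * (X ^ (i + 1)) $$ k)"
  proof (rule sum.mono_neutral_right)
    show "{1..<nat k} \<subseteq> {1..N}" using assms(2) by auto
    show "\<forall>i\<in>{1..N} - {1..<nat k}. f i * (X ^ (i + 1)) $$ k = 0"
    proof
      fix i assume "i \<in> {1..N} - {1..<nat k}"
      then have "k < int (i + 1)" by auto
      moreover have "vanishes_below (int (i + 1)) (X ^ (i + 1))"
        using vanishes_below_power[OF assms(1), of "i + 1"] by simp
      ultimately show "f i * (X ^ (i + 1)) $$ k = 0" by (simp add: vanishes_below_def)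
    qed
  qed simp
  finally show ?thesis .
qed

lemma Orlov_minus_trunc_vanishes_below:
  assumes A: "finite A" "{a. 2 \<le> fst a + snd a \<and> s a \<noteq> 0} \<subseteq> A" "\<forall>a\<in>A. 2 \<le> fst a + snd a"
    and L: "L s $$ (-1) \<noteq> 0" "vanishes_below (-1) (L s)"
  shows "vanishes_below (int N + 2) (Orlov sel c L w s - Orlov_trunc sel c L w A N s)"
proof -
  have times_part:
    "(\<Sum>a\<in>{a. 2 \<le> fst a + snd a \<and> s a \<noteq> 0}. fls_const (of_nat (sel a) * s a) * L s ^ (sel a - 1))
       = (\<Sum>a\<in>A. fls_const (of_nat (sel a) * s a) * L s ^ (sel a - 1))"
    by (rule sum.mono_neutral_left) (use A in auto)
  have tail: "Abs_fls (\<lambda>k. \<Sum>i\<in>{1..<nat k}. w (i + 1) s * inverse (L s ^ (i + 1)) $$ k) $$ k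
      = (\<Sum>i\<in>{1..N}. fls_const (w (i + 1) s) * inverse (L s) ^ (i + 1)) $$ k" if "k < int N + 2" for k
  proof -
    have "Abs_fls (\<lambda>k. \<Sum>i\<in>{1..<nat k}. w (i + 1) s * inverse (L s ^ (i + 1)) $$ k) $$ k
        = (\<Sum>i\<in>{1..<nat k}. w (i + 1) s * inverse (L s ^ (i + 1)) $$ k)"
      by (rule nth_Abs_fls_lower_bound[of 2]) auto
    then show ?thesis
      using sum_power_nth_truncate[OF vanishes_below_inverse[OF L] that, of "\<lambda>i. w (i + 1) s"]
      by (simp add: power_inverse)
  qed
  show ?thesis unfolding vanishes_below_def
  proof (intro allI impI)
    fix k assume "k < int N + 2"
    then show "(Orlov sel c L w s - Orlov_trunc sel c L w A N s) $$ k = 0"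
      unfolding Orlov_def Orlov_trunc_def times_part using tail[of k] by simp
  qed
qed

section \<open>The flow of a single Orlov function\<close>

text \<open>One flow t_b at the point t, for a Lax function L and its Orlov function M in the
  representation in which L is a genuine Laurent series: P stands for d/dp, r for the index of
  the residue and \<epsilon> for the residue of P(L)/L.\<close>

locale lax_flow =
  fixes sel :: "nat \<times> nat \<Rightarrow> nat" and c :: "nat \<times> nat" and L :: tser and w :: "nat \<Rightarrow> times \<Rightarrow> complex"
    and H :: tser and P :: "complex fls \<Rightarrow> complex fls" and r :: int and \<epsilon> :: complex
    and t :: times and b :: "nat \<times> nat" and h :: nat
  assumes t_Tdom: "t \<in> Tdom"
    and b_degree: "2 \<le> fst b + snd b"
    and c_degree: "fst c + snd c < 2"
    and P_derivation: "fls_derivation P"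
    and P_vanishes_below: "\<forall>N F. vanishes_below N F \<longrightarrow> vanishes_below (N - 1) (P F)"
    and P_residue: "\<forall>F. P F $$ r = 0"
    and r_le: "r \<le> 1"
    and L_smooth: "smooth_bz b t L"
    and L_pole_b: "\<forall>s. L (t(b := s)) $$ (-1) \<noteq> 0 \<and> vanishes_below (-1) (L (t(b := s)))"
    and L_pole_z: "\<forall>s. L (t((1,0) := s)) $$ (-1) \<noteq> 0 \<and> vanishes_below (-1) (L (t((1,0) := s)))"
    and residue_log: "(inverse (L t) * P (L t)) $$ r = \<epsilon>"
    and w_diff_b: "\<forall>i. (\<lambda>s. w i (t(b := s))) field_differentiable at (t b)"
    and w_diff_z: "\<forall>i. (\<lambda>s. w i (t((1,0) := s))) field_differentiable at (t (1,0))"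
    and H_vanishes_below: "\<forall>s. vanishes_below (- int h) (H (t((1,0) := s)))"
    and Lax_L: "pd_fls b L t = P (H t) * pd_fls (1,0) L t - pd_fls (1,0) H t * P (L t)"
    and Lax_M: "pd_fls b (Orlov sel c L w) t =
                  P (H t) * pd_fls (1,0) (Orlov sel c L w) t - pd_fls (1,0) H t * P (Orlov sel c L w t)"
    and canonical: "P (L t) * pd_fls (1,0) (Orlov sel c L w) t - pd_fls (1,0) L t * P (Orlov sel c L w t) = 1"
begin

text \<open>The times of degree at least 2 that can be nonzero on the lines through t in the
  directions t_b and z.\<close>

definition active :: "(nat \<times> nat) set" where
  "active = {a. 2 \<le> fst a + snd a \<and> t a \<noteq> 0} \<union> {b}"

lemma finite_active: "finite active"
  using t_Tdom unfolding active_def Tdom_def by (auto intro: finite_subset)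

abbreviation M_trunc :: "nat \<Rightarrow> tser" where
  "M_trunc N \<equiv> Orlov_trunc sel c L w active N"

lemma Orlov_minus_M_trunc:
  assumes "d = b \<or> d = (1,0)"
  shows "vanishes_below (int N + 2) (Orlov sel c L w (t(d := s)) - M_trunc N (t(d := s)))"
  by (rule Orlov_minus_trunc_vanishes_below)
    (use assms finite_active b_degree L_pole_b L_pole_z in \<open>auto simp: active_def\<close>)

lemma smooth_bz_inverse_L: "smooth_bz b t (\<lambda>s. inverse (L s))"
  using smooth_along_inverse[of b t L] smooth_along_inverse[of "(1,0)" t L] L_smooth L_pole_b L_pole_z
  by (simp add: smooth_bz_def)

lemma smooth_bz_time: "smooth_bz b t (\<lambda>s. fls_const (C * s a))"
  unfolding smooth_bz_def by (intro conjI smooth_along_const coordinate_differentiable)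

lemma smooth_bz_w: "smooth_bz b t (\<lambda>s. fls_const (w i s))"
  using w_diff_b w_diff_z by (simp add: smooth_bz_def smooth_along_const)

lemma smooth_bz_M_trunc: "smooth_bz b t (M_trunc N)"
proof -
  have "smooth_bz b t (\<lambda>s. fls_const (s c))" using smooth_bz_time[of 1 c] by simp
  then show ?thesis unfolding Orlov_trunc_def
    by (intro smooth_bz_add smooth_bz_sum smooth_bz_mult smooth_bz_power smooth_bz_time smooth_bz_w
        smooth_bz_inverse_L L_smooth finite_active finite_atLeastAtMost)
qed

definition dw_b :: "nat \<Rightarrow> complex" where
  "dw_b i = deriv (\<lambda>s. w i (t(b := s))) (t b)"

definition dw_z :: "nat \<Rightarrow> complex" where
  "dw_z i = deriv (\<lambda>s. w i (t((1,0) := s))) (t (1,0))"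

text \<open>An operator lax_op annihilating L only sees the explicit times and the coefficients w_i of
  M_trunc N; flow_coeffs N and z_coeffs N collect the resulting t_b- and z-derivatives
  (lax_op_M_trunc).\<close>

definition flow_coeffs :: "nat \<Rightarrow> complex fls" where
  "flow_coeffs N = fls_const (of_nat (sel b)) * L t ^ (sel b - 1)
     + (\<Sum>i\<in>{1..N}. fls_const (dw_b (i + 1)) * inverse (L t) ^ (i + 1))"

definition z_coeffs :: "nat \<Rightarrow> complex fls" where
  "z_coeffs N = fls_const (if c = (1,0) then 1 else 0)
     + (\<Sum>i\<in>{1..N}. fls_const (dw_z (i + 1)) * inverse (L t) ^ (i + 1))"

lemma lax_op_active_sum:
  assumes L_annihilated: "lax_op b t \<alpha> \<beta> \<gamma> P L = 0"
  shows "lax_op b t \<alpha> \<beta> \<gamma> P (\<lambda>s. \<Sum>a\<in>active. fls_const (of_nat (sel a) * s a) * L s ^ (sel a - 1))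
           = \<alpha> * (fls_const (of_nat (sel b)) * L t ^ (sel b - 1))"
proof -
  have summand: "lax_op b t \<alpha> \<beta> \<gamma> P (\<lambda>s. fls_const (of_nat (sel a) * s a) * L s ^ (sel a - 1))
      = (if a = b then \<alpha> * (fls_const (of_nat (sel b)) * L t ^ (sel b - 1)) else 0)" if "a \<in> active" for a
  proof -
    have "a \<noteq> (1,0)" using that b_degree by (auto simp: active_def)
    then have "lax_op b t \<alpha> \<beta> \<gamma> P (\<lambda>s. fls_const (of_nat (sel a) * s a))
        = \<alpha> * fls_const (if a = b then of_nat (sel a) else 0)"
      by (simp add: lax_op_const[OF P_derivation] deriv_coordinate)
    then show ?thesis
      using lax_op_mult[OF P_derivation smooth_bz_time smooth_bz_power[OF L_smooth]]
        lax_op_power[OF P_derivation L_smooth L_annihilated]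
      by (simp add: mult.assoc)
  qed
  have "lax_op b t \<alpha> \<beta> \<gamma> P (\<lambda>s. \<Sum>a\<in>active. fls_const (of_nat (sel a) * s a) * L s ^ (sel a - 1))
      = (\<Sum>a\<in>active. lax_op b t \<alpha> \<beta> \<gamma> P (\<lambda>s. fls_const (of_nat (sel a) * s a) * L s ^ (sel a - 1)))"
    by (intro lax_op_sum P_derivation finite_active smooth_bz_mult smooth_bz_time smooth_bz_power L_smooth)
  also have "\<dots> = (\<Sum>a\<in>active. if a = b then \<alpha> * (fls_const (of_nat (sel b)) * L t ^ (sel b - 1)) else 0)"
    by (rule sum.cong[OF refl]) (rule summand)
  also have "\<dots> = \<alpha> * (fls_const (of_nat (sel b)) * L t ^ (sel b - 1))"
    using finite_active by (simp add: active_def)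
  finally show ?thesis .
qed

lemma lax_op_base_time:
  "lax_op b t \<alpha> \<beta> \<gamma> P (\<lambda>s. fls_const (s c)) = \<beta> * fls_const (if c = (1,0) then 1 else 0)"
proof -
  have "c \<noteq> b" using b_degree c_degree by auto
  then show ?thesis
    using lax_op_const[OF P_derivation, of b t \<alpha> \<beta> \<gamma> "\<lambda>s. s c"]
      deriv_coordinate[of 1 t b c] deriv_coordinate[of 1 t "(1,0)" c]
    by simp
qed

lemma lax_op_tail:
  assumes L_annihilated: "lax_op b t \<alpha> \<beta> \<gamma> P L = 0"
  shows "lax_op b t \<alpha> \<beta> \<gamma> P (\<lambda>s. \<Sum>i\<in>{1..N}. fls_const (w (i + 1) s) * inverse (L s) ^ (i + 1))
           = \<alpha> * (\<Sum>i\<in>{1..N}. fls_const (dw_b (i + 1)) * inverse (L t) ^ (i + 1))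
             + \<beta> * (\<Sum>i\<in>{1..N}. fls_const (dw_z (i + 1)) * inverse (L t) ^ (i + 1))"
proof -
  have L_nonzero: "\<forall>s. L (t(b := s)) \<noteq> 0" "\<forall>s. L (t((1,0) := s)) \<noteq> 0"
    using L_pole_b L_pole_z by (metis fls_nonzeroI)+
  have inverse_power: "lax_op b t \<alpha> \<beta> \<gamma> P (\<lambda>s. inverse (L s) ^ n) = 0" for n
    by (intro lax_op_power P_derivation smooth_bz_inverse_L
        lax_op_inverse[OF P_derivation L_smooth smooth_bz_inverse_L L_annihilated L_nonzero])
  have summand: "lax_op b t \<alpha> \<beta> \<gamma> P (\<lambda>s. fls_const (w (i + 1) s) * inverse (L s) ^ (i + 1))
      = \<alpha> * (fls_const (dw_b (i + 1)) * inverse (L t) ^ (i + 1))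
        + \<beta> * (fls_const (dw_z (i + 1)) * inverse (L t) ^ (i + 1))" for i
    by (simp only: lax_op_mult[OF P_derivation smooth_bz_w smooth_bz_power[OF smooth_bz_inverse_L]]
        inverse_power lax_op_const[OF P_derivation] dw_b_def dw_z_def) (simp add: algebra_simps)
  have "lax_op b t \<alpha> \<beta> \<gamma> P (\<lambda>s. \<Sum>i\<in>{1..N}. fls_const (w (i + 1) s) * inverse (L s) ^ (i + 1))
      = (\<Sum>i\<in>{1..N}. lax_op b t \<alpha> \<beta> \<gamma> P (\<lambda>s. fls_const (w (i + 1) s) * inverse (L s) ^ (i + 1)))"
    by (intro lax_op_sum P_derivation finite_atLeastAtMost smooth_bz_mult smooth_bz_w smooth_bz_power
        smooth_bz_inverse_L)
  also have "\<dots> = (\<Sum>i\<in>{1..N}. \<alpha> * (fls_const (dw_b (i + 1)) * inverse (L t) ^ (i + 1))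
      + \<beta> * (fls_const (dw_z (i + 1)) * inverse (L t) ^ (i + 1)))"
    by (rule sum.cong[OF refl]) (rule summand)
  finally show ?thesis by (simp add: sum.distrib sum_distrib_left)
qed

lemma lax_op_M_trunc:
  assumes L_annihilated: "lax_op b t \<alpha> \<beta> \<gamma> P L = 0"
  shows "lax_op b t \<alpha> \<beta> \<gamma> P (M_trunc N) = \<alpha> * flow_coeffs N + \<beta> * z_coeffs N"
proof -
  define A where "A = (\<lambda>s. \<Sum>a\<in>active. fls_const (of_nat (sel a) * s a) * L s ^ (sel a - 1))"
  define C where "C = (\<lambda>s::times. fls_const (s c))"
  define T where "T = (\<lambda>s. \<Sum>i\<in>{1..N}. fls_const (w (i + 1) s) * inverse (L s) ^ (i + 1))"
  have smooth: "smooth_bz b t A" "smooth_bz b t C" "smooth_bz b t T"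
    unfolding A_def C_def T_def using smooth_bz_time[of 1 c]
    by (auto intro!: smooth_bz_sum smooth_bz_mult smooth_bz_time smooth_bz_power smooth_bz_w
        smooth_bz_inverse_L L_smooth finite_active)
  have "M_trunc N = (\<lambda>s. (A s + C s) + T s)" unfolding Orlov_trunc_def A_def C_def T_def by (rule ext) simp
  then have "lax_op b t \<alpha> \<beta> \<gamma> P (M_trunc N)
      = lax_op b t \<alpha> \<beta> \<gamma> P A + lax_op b t \<alpha> \<beta> \<gamma> P C + lax_op b t \<alpha> \<beta> \<gamma> P T"
    using lax_op_add[OF P_derivation smooth_bz_add[OF smooth(1,2)] smooth(3)]
      lax_op_add[OF P_derivation smooth(1,2)] by simp
  also have "\<dots> = \<alpha> * flow_coeffs N + \<beta> * z_coeffs N"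
    unfolding A_def C_def T_def lax_op_active_sum[OF L_annihilated] lax_op_base_time lax_op_tail[OF L_annihilated]
      flow_coeffs_def z_coeffs_def
    by (simp add: algebra_simps)
  finally show ?thesis .
qed

lemma lax_op_Orlov_minus_M_trunc:
  assumes "vanishes_below A \<alpha>" "vanishes_below B \<beta>" "vanishes_below C \<gamma>"
  shows "vanishes_below (int N + 1 + min A (min B C))
           (lax_op b t \<alpha> \<beta> \<gamma> P (Orlov sel c L w) - lax_op b t \<alpha> \<beta> \<gamma> P (M_trunc N))"
proof -
  let ?M = "Orlov sel c L w"
  have close: "\<forall>s. vanishes_below (int N + 2) (?M (t(d := s)) - M_trunc N (t(d := s)))"
    if "d = b \<or> d = (1,0)" for d
    using Orlov_minus_M_trunc[OF that] by blast
  have trunc_bounded: "bounded_along d t (M_trunc N)" if "d = b \<or> d = (1,0)" for d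
    using smooth_bz_M_trunc that by (auto simp: smooth_bz_def smooth_along_def)
  have pd_close: "vanishes_below (int N + 2) (pd_fls d ?M t - pd_fls d (M_trunc N) t)"
    if "d = b \<or> d = (1,0)" for d
  proof -
    have "bounded_along d t ?M" by (rule bounded_along_close[OF trunc_bounded[OF that] close[OF that]])
    then show ?thesis by (rule vanishes_below_pd_fls_diff[OF _ trunc_bounded[OF that] close[OF that]])
  qed
  have "vanishes_below (int N + 2) (?M t - M_trunc N t)"
    using close[of b] by (metis fun_upd_triv)
  then have P_close: "vanishes_below (int N + 2 - 1) (P (?M t) - P (M_trunc N t))"
    by (rule vanishes_below_derivation_diff[OF P_derivation P_vanishes_below])
  have "vanishes_below (int N + 2 + min A (min B C) - 1)
      (\<alpha> * (pd_fls b ?M t - pd_fls b (M_trunc N) t) + \<beta> * (pd_fls (1,0) ?M t - pd_fls (1,0) (M_trunc N) t)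
        + \<gamma> * (P (?M t) - P (M_trunc N t)))"
    by (intro vanishes_below_lin_comb assms pd_close P_close) simp_all
  then show ?thesis by (simp add: lax_op_def algebra_simps)
qed

lemma flow_coeffs_approx: "vanishes_below (int N - int h) (flow_coeffs N - P (H t) * z_coeffs N)"
proof -
  let ?op = "lax_op b t 1 (- P (H t)) (pd_fls (1,0) H t) P"
  have L_annihilated: "?op L = 0" unfolding lax_op_def Lax_L by (simp add: algebra_simps)
  have M_annihilated: "?op (Orlov sel c L w) = 0" unfolding lax_op_def Lax_M by (simp add: algebra_simps)
  have H_t: "vanishes_below (- int h) (H t)" using H_vanishes_below[rule_format, of "t (1,0)"] by simp
  have P_H: "vanishes_below (- int h - 1) (P (H t))" using P_vanishes_below H_t by blast
  have "vanishes_below (int N + 1 + min 0 (min (- int h - 1) (- int h)))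
      (?op (Orlov sel c L w) - ?op (M_trunc N))"
    by (rule lax_op_Orlov_minus_M_trunc[OF vanishes_below_const[of 1, unfolded fls_const_1]
        vanishes_below_uminus[OF P_H] vanishes_below_pd_fls[OF H_vanishes_below]])
  then have "vanishes_below (int N - int h) (- (flow_coeffs N - P (H t) * z_coeffs N))"
    unfolding M_annihilated lax_op_M_trunc[OF L_annihilated] by (auto elim: vanishes_below_mono)
  then show ?thesis using vanishes_below_uminus by fastforce
qed

lemma z_coeffs_approx: "vanishes_below (int N - 1) (P (L t) * z_coeffs N - 1)"
proof -
  let ?op = "lax_op b t 0 (P (L t)) (- pd_fls (1,0) L t) P"
  have L_annihilated: "?op L = 0" unfolding lax_op_def by (simp add: algebra_simps)
  have M_bracket: "?op (Orlov sel c L w) = 1" unfolding lax_op_def using canonical by (simp add: algebra_simps)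
  have L_t: "vanishes_below (-1) (L t)" using L_pole_b[rule_format, of "t b"] by simp
  have P_L: "vanishes_below (-2) (P (L t))" using P_vanishes_below L_t by fastforce
  have z_L: "vanishes_below (-1) (pd_fls (1,0) L t)" by (rule vanishes_below_pd_fls) (use L_pole_z in blast)
  have "vanishes_below (int N + 1 + min (-2) (min (-2) (-1))) (?op (Orlov sel c L w) - ?op (M_trunc N))"
    by (rule lax_op_Orlov_minus_M_trunc[OF vanishes_below_zero P_L vanishes_below_uminus[OF z_L]])
  then have "vanishes_below (int N - 1) (- (P (L t) * z_coeffs N - 1))"
    unfolding M_bracket lax_op_M_trunc[OF L_annihilated] by simp
  then show ?thesis using vanishes_below_uminus by fastforce
qed

lemma flow_coeffs_residue:
  assumes "1 \<le> j" "j \<le> N"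
  shows "(flow_coeffs N * (L t ^ j * P (L t))) $$ r = \<epsilon> * dw_b (j + 1)"
proof -
  have L_nonzero: "L t \<noteq> 0" using L_pole_b[rule_format, of "t b"] by (metis fls_nonzeroI fun_upd_triv)
  have "(fls_const (of_nat (sel b)) * L t ^ (sel b - 1) * (L t ^ j * P (L t))) $$ r = 0"
    using power_mult_derivation_coeff[OF P_derivation P_residue, of "L t" "sel b - 1 + j"]
    by (simp add: power_add mult.assoc)
  moreover have "(fls_const (dw_b (i + 1)) * inverse (L t) ^ (i + 1) * (L t ^ j * P (L t))) $$ r
      = (if i = j then \<epsilon> * dw_b (i + 1) else 0)" for i
    using inverse_power_mult_power_derivation_coeff[OF P_derivation P_residue L_nonzero, of i j] residue_log
    by (simp add: mult.assoc)
  ultimately have "(flow_coeffs N * (L t ^ j * P (L t))) $$ r = (\<Sum>i\<in>{1..N}. if i = j then \<epsilon> * dw_b (i + 1) else 0)"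
    unfolding flow_coeffs_def by (simp add: distrib_right sum_distrib_right fls_nth_sum)
  also have "\<dots> = \<epsilon> * dw_b (j + 1)" using assms by simp
  finally show ?thesis .
qed

text \<open>By the two approximations flow_coeffs N \<cdot> P(L) agrees with P(H) to high order, hence so do
  their products with L^j near the residue.\<close>

theorem orlov_coeff_flow:
  assumes "1 \<le> j"
  shows "\<epsilon> * dw_b (j + 1) = (L t ^ j * P (H t)) $$ r"
proof -
  define N where "N = j + 2 * h + 4"
  have L_t: "vanishes_below (-1) (L t)" using L_pole_b[rule_format, of "t b"] by simp
  have H_t: "vanishes_below (- int h) (H t)" using H_vanishes_below[rule_format, of "t (1,0)"] by simp
  have L_pow: "vanishes_below (- int j) (L t ^ j)" using vanishes_below_power[OF L_t, of j] by simp
  have P_L: "vanishes_below (-2) (P (L t))" using P_vanishes_below L_t by fastforce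
  have P_H: "vanishes_below (- int h - 1) (P (H t))" using P_vanishes_below H_t by blast
  have "vanishes_below (int N - int h + (- int j + -2))
      ((flow_coeffs N - P (H t) * z_coeffs N) * (L t ^ j * P (L t)))"
    by (intro vanishes_below_mult flow_coeffs_approx L_pow P_L)
  moreover have "vanishes_below (int N - 1 + (- int j + (- int h - 1)))
      ((P (L t) * z_coeffs N - 1) * (L t ^ j * P (H t)))"
    by (intro vanishes_below_mult z_coeffs_approx L_pow P_H)
  ultimately have "vanishes_below 2 ((flow_coeffs N - P (H t) * z_coeffs N) * (L t ^ j * P (L t))
      + (P (L t) * z_coeffs N - 1) * (L t ^ j * P (H t)))"
    unfolding N_def by (intro vanishes_below_add) (auto elim: vanishes_below_mono)
  then have "vanishes_below 2 (flow_coeffs N * (L t ^ j * P (L t)) - L t ^ j * P (H t))"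
    by (simp add: algebra_simps)
  then have "(flow_coeffs N * (L t ^ j * P (L t))) $$ r = (L t ^ j * P (H t)) $$ r"
    using r_le by (auto simp: vanishes_below_def)
  then show ?thesis using flow_coeffs_residue[OF assms, of N] unfolding N_def by simp
qed

end

section \<open>Residue sums\<close>

lemma derivation_dpx: "fls_derivation dpx"
  unfolding fls_derivation_def dpx_def by (simp add: algebra_simps)

lemma derivation_fls_deriv: "fls_derivation fls_deriv"
  unfolding fls_derivation_def by (simp add: algebra_simps)

lemma residue_log_dpx:
  assumes "L $$ (-1) = 1" "vanishes_below (-1) L"
  shows "(inverse L * dpx L) $$ 1 = 1"
proof -
  have "L \<noteq> 0" using assms by (metis fls_nonzeroI one_neq_zero)
  moreover have "fls_subdegree L = -1"
    using assms by (intro fls_subdegree_eqI) (auto simp: vanishes_below_def)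
  ultimately have "inverse L $$ 1 = 1" using fls_inverse_base assms(1) by fastforce
  moreover have "vanishes_below 1 (inverse L)" by (rule vanishes_below_inverse) (use assms in simp_all)
  ultimately show ?thesis
    using fls_times_nth_bounded[OF _ vanishes_below_dpx[OF assms(2)], of 1 "inverse L" 1] assms
    by (simp add: dpx_nth)
qed

lemma residue_log_fls_deriv:
  fixes L :: "'a::field fls"
  assumes "L $$ (-1) \<noteq> 0" "vanishes_below (-1) L"
  shows "(inverse L * fls_deriv L) $$ (-1) = -1"
proof -
  have "L \<noteq> 0" using assms by (metis fls_nonzeroI)
  moreover have "fls_subdegree L = -1"
    using assms by (intro fls_subdegree_eqI) (auto simp: vanishes_below_def)
  ultimately have "inverse L $$ 1 = inverse (L $$ (-1))" using fls_inverse_base by fastforce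
  moreover have "vanishes_below 1 (inverse L)" by (rule vanishes_below_inverse) (use assms in simp_all)
  ultimately show ?thesis
    using fls_times_nth_bounded[OF _ vanishes_below_fls_deriv[OF assms(2)], of 1 "inverse L" "-1"] assms
    by simp
qed

lemma sum_coeff_pairs_extend:
  fixes A G :: "'a::comm_ring_1 fls"
  assumes "vanishes_below NA A" "vanishes_below NG G" "-T \<le> NA" "-T \<le> NG"
  shows "(\<Sum>i=NA..-NG. f i * A $$ i * G $$ (-i)) = (\<Sum>i\<in>{-T..T}. f i * A $$ i * G $$ (-i))"
proof (rule sum.mono_neutral_left)
  show "\<forall>i\<in>{-T..T} - {NA..-NG}. f i * A $$ i * G $$ (-i) = 0"
  proof
    fix i assume "i \<in> {-T..T} - {NA..-NG}"
    then have "i < NA \<or> -i < NG" by auto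
    then show "f i * A $$ i * G $$ (-i) = 0" using assms(1,2) by (auto simp: vanishes_below_def)
  qed
qed (use assms in auto)

lemma residue_dpx_sum:
  assumes "vanishes_below NA A" "vanishes_below NG G" "-T \<le> NA" "-T \<le> NG"
  shows "(A * dpx G) $$ 1 = (\<Sum>i\<in>{-T..T}. of_int i * A $$ i * G $$ (-i))"
proof -
  have "(A * dpx G) $$ 1 = (\<Sum>i=NA..1-(NG+1). A $$ i * dpx G $$ (1-i))"
    by (rule fls_times_nth_bounded[OF assms(1) vanishes_below_dpx[OF assms(2)]])
  also have "\<dots> = (\<Sum>i=NA..-NG. of_int i * A $$ i * G $$ (-i))"
    by (simp add: dpx_nth algebra_simps)
  finally show ?thesis using sum_coeff_pairs_extend[OF assms] by simp
qed

lemma residue_fls_deriv_sum: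
  fixes A G :: "'a::comm_ring_1 fls"
  assumes "vanishes_below NA A" "vanishes_below NG G" "-T \<le> NA" "-T \<le> NG"
  shows "(A * fls_deriv G) $$ (-1) = - (\<Sum>i\<in>{-T..T}. of_int i * A $$ i * G $$ (-i))"
proof -
  have "(A * fls_deriv G) $$ (-1) = (\<Sum>i=NA..-1-(NG-1). A $$ i * fls_deriv G $$ (-1-i))"
    by (rule fls_times_nth_bounded[OF assms(1) vanishes_below_fls_deriv[OF assms(2)]])
  also have "\<dots> = - (\<Sum>i=NA..-NG. of_int i * A $$ i * G $$ (-i))"
    by (simp add: algebra_simps sum_negf[symmetric])
  finally show ?thesis using sum_coeff_pairs_extend[OF assms] by simp
qed

lemma sum_symmetric_interval_reflect: "(\<Sum>i\<in>{-T..T::int}. f (-i)) = (\<Sum>i\<in>{-T..T}. f i)"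
  by (rule sum.reindex_bij_witness[of _ uminus uminus]) auto

text \<open>With A, A' the coefficients of L^m, L^m' and B, B' those of Lhat^n, Lhat^n', the two sides
  are the residue sums for the derivative of v_{m'+1} + vhat_{n'+1} in t_mn and of
  v_{m+1} + vhat_{n+1} in t_m'n'. The hypotheses are res (L^m' d(L^m)) = 0 and its analogue
  for Lhat; the terms that do not cancel against them match up under i \<mapsto> -i.\<close>

lemma residue_sum_symmetric:
  fixes A A' B B' :: "int \<Rightarrow> 'a::comm_ring_1"
  assumes ZA: "(\<Sum>i\<in>{-T..T}. of_int i * A' i * A (-i)) = 0"
    and ZB: "(\<Sum>i\<in>{-T..T}. of_int i * B' i * B (-i)) = 0"
  shows "(\<Sum>i\<in>{-T..T}. of_int i * A' i * ((if 0 < i then A (-i) else 0) + (if i \<le> 0 then B i else 0))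
           + of_int i * B' i * ((if 0 < -i then A (-(-i)) else 0) + (if -i \<le> 0 then B (-i) else 0)))
       = (\<Sum>i\<in>{-T..T}. of_int i * A i * ((if 0 < i then A' (-i) else 0) + (if i \<le> 0 then B' i else 0))
           + of_int i * B i * ((if 0 < -i then A' (-(-i)) else 0) + (if -i \<le> 0 then B' (-i) else 0)))"
    (is "(\<Sum>i\<in>_. ?f i) = (\<Sum>i\<in>_. ?g i)")
proof -
  define g1 where
    "g1 i = of_int i * A i * (if 0 < i then A' (-i) else 0) + of_int i * B i * (if 0 \<le> i then B' (-i) else 0)"
    for i
  define g2 where
    "g2 i = of_int i * A i * (if i \<le> 0 then B' i else 0) + of_int i * B i * (if i < 0 then A' i else 0)"
    for i
  have f_split: "?f i = g1 (-i) + g2 i + (of_int i * A' i * A (-i) + of_int i * B' i * B (-i))" for i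
    by (cases i "0::int" rule: linorder_cases) (simp_all add: g1_def g2_def algebra_simps)
  have g_split: "?g i = g1 i + g2 i" for i
    by (cases i "0::int" rule: linorder_cases) (simp_all add: g1_def g2_def algebra_simps)
  have "(\<Sum>i\<in>{-T..T}. ?f i) = (\<Sum>i\<in>{-T..T}. g1 (-i)) + (\<Sum>i\<in>{-T..T}. g2 i)
      + ((\<Sum>i\<in>{-T..T}. of_int i * A' i * A (-i)) + (\<Sum>i\<in>{-T..T}. of_int i * B' i * B (-i)))"
    by (simp only: f_split sum.distrib)
  also have "\<dots> = (\<Sum>i\<in>{-T..T}. g1 i) + (\<Sum>i\<in>{-T..T}. g2 i)"
    by (simp only: ZA ZB sum_symmetric_interval_reflect) simp
  also have "\<dots> = (\<Sum>i\<in>{-T..T}. ?g i)" by (simp only: g_split sum.distrib)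
  finally show ?thesis .
qed

section \<open>Closedness of the tau form\<close>

lemma Tdom_fun_upd: "t \<in> Tdom \<Longrightarrow> t(a := s) \<in> Tdom"
proof -
  assume "t \<in> Tdom"
  then have "finite (insert a {x. t x \<noteq> 0})" by (simp add: Tdom_def)
  moreover have "{x. (t(a := s)) x \<noteq> 0} \<subseteq> insert a {x. t x \<noteq> 0}" by auto
  ultimately show ?thesis unfolding Tdom_def by (simp add: finite_subset)
qed

lemma pdifferentiable_along:
  "pdifferentiable f \<Longrightarrow> t \<in> Tdom \<Longrightarrow> (\<lambda>s. f (t(a := s))) field_differentiable at (t a)"
  unfolding pdifferentiable_def by blast

lemma pdifferentiable_vconv:
  "\<forall>i. pdifferentiable (w i) \<Longrightarrow> t \<in> Tdom \<Longrightarrow>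
     (\<lambda>s. vconv w j (t(d := s))) field_differentiable at (t d)"
  by (cases "j = 1") (simp_all add: vconv_def pdifferentiable_along)

locale dDS_solution =
  fixes Lx Lh :: tser and v vh :: "nat \<Rightarrow> times \<Rightarrow> complex"
  assumes L_form: "\<forall>t\<in>Tdom. fls_nth (Lx t) (-1) = 1 \<and> (\<forall>k < -1. fls_nth (Lx t) k = 0)"
    and Lh_form: "\<forall>t\<in>Tdom. fls_nth (Lh t) (-1) \<noteq> 0 \<and> (\<forall>k < -1. fls_nth (Lh t) k = 0)"
    and diff_L: "\<forall>k. pdifferentiable (\<lambda>t. fls_nth (Lx t) k)"
    and diff_Lh: "\<forall>k. pdifferentiable (\<lambda>t. fls_nth (Lh t) k)"
    and diff_v: "\<forall>i. pdifferentiable (v i)"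
    and diff_vh: "\<forall>i. pdifferentiable (vh i)"
    and Lax_L: "\<forall>a t k. 1 \<le> fst a + snd a \<longrightarrow> t \<in> Tdom \<longrightarrow>
                  pd a (\<lambda>s. fls_nth (Lx s) k) t = fls_nth (PBx (Hx Lx Lh a) Lx t) k"
    and Lax_M: "\<forall>a t k. 1 \<le> fst a + snd a \<longrightarrow> t \<in> Tdom \<longrightarrow>
                  pd a (\<lambda>s. fls_nth (Mx Lx v s) k) t = fls_nth (PBx (Hx Lx Lh a) (Mx Lx v) t) k"
    and Lax_Lh: "\<forall>a t k. 1 \<le> fst a + snd a \<longrightarrow> t \<in> Tdom \<longrightarrow>
                  pd a (\<lambda>s. fls_nth (Lh s) k) t = fls_nth (PBp (Hp Lx Lh a) Lh t) k"
    and Lax_Mh: "\<forall>a t k. 1 \<le> fst a + snd a \<longrightarrow> t \<in> Tdom \<longrightarrow>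
                  pd a (\<lambda>s. fls_nth (Mp Lh vh s) k) t = fls_nth (PBp (Hp Lx Lh a) (Mp Lh vh) t) k"
    and canon: "\<forall>t\<in>Tdom. PBx Lx (Mx Lx v) t = 1"
    and canon_h: "\<forall>t\<in>Tdom. PBp Lh (Mp Lh vh) t = 1"
begin

lemma Lx_vanishes_below: "s \<in> Tdom \<Longrightarrow> vanishes_below (-1) (Lx s)"
  using L_form by (simp add: vanishes_below_def)

lemma Lh_vanishes_below: "s \<in> Tdom \<Longrightarrow> vanishes_below (-1) (Lh s)"
  using Lh_form by (simp add: vanishes_below_def)

lemma Hx_nth: "s \<in> Tdom \<Longrightarrow> Hx Lx Lh d s $$ k = Hcoef Lx Lh d s (-k)"
  unfolding Hx_def
proof (rule nth_Abs_fls_lower_bound[of "- int (fst d)"], intro allI impI)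
  fix n assume "s \<in> Tdom" "n < - int (fst d)"
  moreover have "vanishes_below (int (fst d) * -1) (Lx s ^ fst d)"
    by (rule vanishes_below_power[OF Lx_vanishes_below[OF \<open>s \<in> Tdom\<close>]])
  ultimately show "Hcoef Lx Lh d s (- n) = 0" by (auto simp: Hcoef_def vanishes_below_def)
qed

lemma Hp_nth: "s \<in> Tdom \<Longrightarrow> Hp Lx Lh d s $$ k = Hcoef Lx Lh d s k"
  unfolding Hp_def
proof (rule nth_Abs_fls_lower_bound[of "- int (snd d)"], intro allI impI)
  fix n assume "s \<in> Tdom" "n < - int (snd d)"
  moreover have "vanishes_below (int (snd d) * -1) (Lh s ^ snd d)"
    by (rule vanishes_below_power[OF Lh_vanishes_below[OF \<open>s \<in> Tdom\<close>]])
  ultimately show "Hcoef Lx Lh d s n = 0" by (auto simp: Hcoef_def vanishes_below_def)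
qed

lemma Hx_vanishes_below: "s \<in> Tdom \<Longrightarrow> vanishes_below (- int (fst d)) (Hx Lx Lh d s)"
  using vanishes_below_power[OF Lx_vanishes_below, of s "fst d"]
  by (auto simp: vanishes_below_def Hcoef_def Hx_nth)

lemma Hp_vanishes_below: "s \<in> Tdom \<Longrightarrow> vanishes_below (- int (snd d)) (Hp Lx Lh d s)"
  using vanishes_below_power[OF Lh_vanishes_below, of s "snd d"]
  by (auto simp: vanishes_below_def Hcoef_def Hp_nth)

lemma smooth_along_Lx: "t \<in> Tdom \<Longrightarrow> smooth_along a t Lx"
  unfolding smooth_along_def bounded_along_def
  using pdifferentiable_along[OF diff_L[rule_format]] Lx_vanishes_below Tdom_fun_upd by blast

lemma smooth_along_Lh: "t \<in> Tdom \<Longrightarrow> smooth_along a t Lh"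
  unfolding smooth_along_def bounded_along_def
  using pdifferentiable_along[OF diff_Lh[rule_format]] Lh_vanishes_below Tdom_fun_upd by blast

lemma lax_flow_L:
  assumes t: "t \<in> Tdom" and d: "2 \<le> fst d + snd d"
  shows "lax_flow fst (1,0) Lx v (Hx Lx Lh d) dpx 1 1 t d (fst d)"
proof
  have d1: "1 \<le> fst d + snd d" using d by simp
  show "t \<in> Tdom" "2 \<le> fst d + snd d" "fst (1::nat, 0::nat) + snd (1::nat, 0::nat) < 2" "(1::int) \<le> 1"
    by (simp_all add: t d)
  show "fls_derivation dpx" by (rule derivation_dpx)
  show "\<forall>N F. vanishes_below N F \<longrightarrow> vanishes_below (N - 1) (dpx F)"
    by (auto intro: vanishes_below_mono[OF vanishes_below_dpx])
  show "\<forall>F. dpx F $$ 1 = 0" by (simp add: dpx_nth)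
  show "smooth_bz d t Lx" by (simp add: smooth_bz_def smooth_along_Lx t)
  show "\<forall>s. Lx (t(d := s)) $$ (-1) \<noteq> 0 \<and> vanishes_below (-1) (Lx (t(d := s)))"
    "\<forall>s. Lx (t((1,0) := s)) $$ (-1) \<noteq> 0 \<and> vanishes_below (-1) (Lx (t((1,0) := s)))"
    using L_form Lx_vanishes_below Tdom_fun_upd[OF t] by simp_all
  show "(inverse (Lx t) * dpx (Lx t)) $$ 1 = 1" using residue_log_dpx L_form Lx_vanishes_below t by simp
  show "\<forall>i. (\<lambda>s. v i (t(d := s))) field_differentiable at (t d)"
    "\<forall>i. (\<lambda>s. v i (t((1,0) := s))) field_differentiable at (t (1,0))"
    using pdifferentiable_along[OF diff_v[rule_format] t] by simp_all
  show "\<forall>s. vanishes_below (- int (fst d)) (Hx Lx Lh d (t((1,0) := s)))"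
    using Hx_vanishes_below[OF Tdom_fun_upd[OF t]] by simp
  show "pd_fls d Lx t = dpx (Hx Lx Lh d t) * pd_fls (1,0) Lx t - pd_fls (1,0) (Hx Lx Lh d) t * dpx (Lx t)"
    using pd_fls_eqI[of d Lx t "PBx (Hx Lx Lh d) Lx t"] Lax_L d1 t by (simp add: PBx_def dz_eq_pd_fls)
  have "pd_fls d (Mx Lx v) t = PBx (Hx Lx Lh d) (Mx Lx v) t"
    using Lax_M d1 t by (intro pd_fls_eqI) blast
  then show "pd_fls d (Orlov fst (1,0) Lx v) t = dpx (Hx Lx Lh d t) * pd_fls (1,0) (Orlov fst (1,0) Lx v) t
      - pd_fls (1,0) (Hx Lx Lh d) t * dpx (Orlov fst (1,0) Lx v t)"
    by (simp add: PBx_def dz_eq_pd_fls Mx_def)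
  show "dpx (Lx t) * pd_fls (1,0) (Orlov fst (1,0) Lx v) t
      - pd_fls (1,0) Lx t * dpx (Orlov fst (1,0) Lx v t) = 1"
    using canon t by (simp add: PBx_def dz_eq_pd_fls Mx_def)
qed

lemma lax_flow_Lhat:
  assumes t: "t \<in> Tdom" and d: "2 \<le> fst d + snd d"
  shows "lax_flow snd (0,1) Lh vh (Hp Lx Lh d) fls_deriv (-1) (-1) t d (snd d)"
proof
  have d1: "1 \<le> fst d + snd d" using d by simp
  show "t \<in> Tdom" "2 \<le> fst d + snd d" "fst (0::nat, 1::nat) + snd (0::nat, 1::nat) < 2" "(-1::int) \<le> 1"
    by (simp_all add: t d)
  show "fls_derivation fls_deriv" by (rule derivation_fls_deriv)
  show "\<forall>N F. vanishes_below N F \<longrightarrow> vanishes_below (N - 1) (fls_deriv F)"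
    by (intro allI impI vanishes_below_fls_deriv)
  show "\<forall>F. fls_deriv F $$ (-1) = 0" by (simp add: fls_deriv_residue)
  show "smooth_bz d t Lh" by (simp add: smooth_bz_def smooth_along_Lh t)
  show "\<forall>s. Lh (t(d := s)) $$ (-1) \<noteq> 0 \<and> vanishes_below (-1) (Lh (t(d := s)))"
    "\<forall>s. Lh (t((1,0) := s)) $$ (-1) \<noteq> 0 \<and> vanishes_below (-1) (Lh (t((1,0) := s)))"
    using Lh_form Lh_vanishes_below Tdom_fun_upd[OF t] by simp_all
  show "(inverse (Lh t) * fls_deriv (Lh t)) $$ (-1) = -1"
    by (rule residue_log_fls_deriv) (use Lh_form Lh_vanishes_below t in auto)
  show "\<forall>i. (\<lambda>s. vh i (t(d := s))) field_differentiable at (t d)"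
    "\<forall>i. (\<lambda>s. vh i (t((1,0) := s))) field_differentiable at (t (1,0))"
    using pdifferentiable_along[OF diff_vh[rule_format] t] by simp_all
  show "\<forall>s. vanishes_below (- int (snd d)) (Hp Lx Lh d (t((1,0) := s)))"
    using Hp_vanishes_below[OF Tdom_fun_upd[OF t]] by simp
  show "pd_fls d Lh t = fls_deriv (Hp Lx Lh d t) * pd_fls (1,0) Lh t - pd_fls (1,0) (Hp Lx Lh d) t * fls_deriv (Lh t)"
    using pd_fls_eqI[of d Lh t "PBp (Hp Lx Lh d) Lh t"] Lax_Lh d1 t by (simp add: PBp_def dz_eq_pd_fls)
  have "pd_fls d (Mp Lh vh) t = PBp (Hp Lx Lh d) (Mp Lh vh) t"
    using Lax_Mh d1 t by (intro pd_fls_eqI) blast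
  then show "pd_fls d (Orlov snd (0,1) Lh vh) t = fls_deriv (Hp Lx Lh d t) * pd_fls (1,0) (Orlov snd (0,1) Lh vh) t
      - pd_fls (1,0) (Hp Lx Lh d) t * fls_deriv (Orlov snd (0,1) Lh vh t)"
    by (simp add: PBp_def dz_eq_pd_fls Mp_def)
  show "fls_deriv (Lh t) * pd_fls (1,0) (Orlov snd (0,1) Lh vh) t
      - pd_fls (1,0) Lh t * fls_deriv (Orlov snd (0,1) Lh vh t) = 1"
    using canon_h t by (simp add: PBp_def dz_eq_pd_fls Mp_def)
qed

lemma pd_v_residue:
  assumes "t \<in> Tdom" "2 \<le> fst d + snd d"
  shows "deriv (\<lambda>s. vconv v (j + 1) (t(d := s))) (t d) = (Lx t ^ j * dpx (Hx Lx Lh d t)) $$ 1"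
proof (cases "j = 0")
  case True
  then show ?thesis by (simp add: vconv_def dpx_nth)
next
  case False
  interpret lax_flow fst "(1,0)" Lx v "Hx Lx Lh d" dpx 1 1 t d "fst d" by (rule lax_flow_L[OF assms])
  show ?thesis using orlov_coeff_flow[of j] False by (simp add: dw_b_def vconv_def)
qed

lemma pd_vhat_residue:
  assumes "t \<in> Tdom" "2 \<le> fst d + snd d"
  shows "deriv (\<lambda>s. vconv vh (j + 1) (t(d := s))) (t d) = - (Lh t ^ j * fls_deriv (Hp Lx Lh d t)) $$ (-1)"
proof (cases "j = 0")
  case True
  then show ?thesis by (simp add: vconv_def fls_deriv_residue)
next
  case False
  interpret lax_flow snd "(0,1)" Lh vh "Hp Lx Lh d" fls_deriv "-1" "-1" t d "snd d"
    by (rule lax_flow_Lhat[OF assms])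
  show ?thesis using orlov_coeff_flow[of j] False by (simp add: dw_b_def vconv_def) (metis minus_minus)
qed

lemma pd_omega:
  assumes t: "t \<in> Tdom" and d: "2 \<le> fst d + snd d" and T: "int (fst e + snd e + fst d + snd d) \<le> T"
  shows "pd d (omega v vh e) t = (\<Sum>i\<in>{-T..T}.
      of_int i * (Lx t ^ fst e) $$ i * Hcoef Lx Lh d t i + of_int i * (Lh t ^ snd e) $$ i * Hcoef Lx Lh d t (-i))"
proof -
  have "pd d (omega v vh e) t
      = deriv (\<lambda>s. vconv v (fst e + 1) (t(d := s)) + vconv vh (snd e + 1) (t(d := s))) (t d)"
    by (simp add: pd_def omega_def)
  also have "\<dots> = deriv (\<lambda>s. vconv v (fst e + 1) (t(d := s))) (t d)
      + deriv (\<lambda>s. vconv vh (snd e + 1) (t(d := s))) (t d)"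
    by (rule deriv_add) (intro pdifferentiable_vconv diff_v diff_vh t)+
  also have "\<dots> = (Lx t ^ fst e * dpx (Hx Lx Lh d t)) $$ 1 - (Lh t ^ snd e * fls_deriv (Hp Lx Lh d t)) $$ (-1)"
    unfolding pd_v_residue[OF t d] pd_vhat_residue[OF t d] by simp
  also have "(Lx t ^ fst e * dpx (Hx Lx Lh d t)) $$ 1
      = (\<Sum>i\<in>{-T..T}. of_int i * (Lx t ^ fst e) $$ i * Hx Lx Lh d t $$ (-i))"
    by (rule residue_dpx_sum[OF vanishes_below_power[OF Lx_vanishes_below[OF t]] Hx_vanishes_below[OF t]])
      (use T in auto)
  also have "(Lh t ^ snd e * fls_deriv (Hp Lx Lh d t)) $$ (-1)
      = - (\<Sum>i\<in>{-T..T}. of_int i * (Lh t ^ snd e) $$ i * Hp Lx Lh d t $$ (-i))"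
    by (rule residue_fls_deriv_sum[OF vanishes_below_power[OF Lh_vanishes_below[OF t]] Hp_vanishes_below[OF t]])
      (use T in auto)
  finally show ?thesis
    by (simp add: Hx_nth[OF t] Hp_nth[OF t] sum.distrib[symmetric] del: Hcoef_def)
qed

lemma omega_closed:
  assumes t: "t \<in> Tdom" and a: "2 \<le> fst a + snd a" and b: "2 \<le> fst b + snd b"
  shows "pd a (omega v vh b) t = pd b (omega v vh a) t"
proof -
  define T where "T = int (fst a + snd a + fst b + snd b)"
  have Lx_bounded: "vanishes_below (- T) (Lx t ^ k)" if "k \<le> fst a + fst b" for k
    using vanishes_below_power[OF Lx_vanishes_below[OF t], of k] that
    by (auto simp: T_def elim: vanishes_below_mono)
  have Lh_bounded: "vanishes_below (- T) (Lh t ^ k)" if "k \<le> snd a + snd b" for k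
    using vanishes_below_power[OF Lh_vanishes_below[OF t], of k] that
    by (auto simp: T_def elim: vanishes_below_mono)
  have "(\<Sum>i\<in>{-T..T}. of_int i * (Lx t ^ fst b) $$ i * (Lx t ^ fst a) $$ (-i))
      = (Lx t ^ fst b * dpx (Lx t ^ fst a)) $$ 1"
    by (rule residue_dpx_sum[OF Lx_bounded Lx_bounded, symmetric]) simp_all
  also have "\<dots> = 0" by (rule power_mult_derivation_power_coeff[OF derivation_dpx]) (simp add: dpx_nth)
  finally have ZA: "(\<Sum>i\<in>{-T..T}. of_int i * (Lx t ^ fst b) $$ i * (Lx t ^ fst a) $$ (-i)) = 0" .
  have "- (\<Sum>i\<in>{-T..T}. of_int i * (Lh t ^ snd b) $$ i * (Lh t ^ snd a) $$ (-i))
      = (Lh t ^ snd b * fls_deriv (Lh t ^ snd a)) $$ (-1)"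
    by (rule residue_fls_deriv_sum[OF Lh_bounded Lh_bounded, symmetric]) simp_all
  also have "\<dots> = 0"
    by (rule power_mult_derivation_power_coeff[OF derivation_fls_deriv]) (simp add: fls_deriv_residue)
  finally have ZB: "(\<Sum>i\<in>{-T..T}. of_int i * (Lh t ^ snd b) $$ i * (Lh t ^ snd a) $$ (-i)) = 0" by simp
  have "pd a (omega v vh b) t = (\<Sum>i\<in>{-T..T}.
      of_int i * (Lx t ^ fst b) $$ i * Hcoef Lx Lh a t i + of_int i * (Lh t ^ snd b) $$ i * Hcoef Lx Lh a t (-i))"
    by (rule pd_omega[OF t a]) (simp add: T_def)
  also have "\<dots> = (\<Sum>i\<in>{-T..T}.
      of_int i * (Lx t ^ fst a) $$ i * Hcoef Lx Lh b t i + of_int i * (Lh t ^ snd a) $$ i * Hcoef Lx Lh b t (-i))"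
    unfolding Hcoef_def by (rule residue_sum_symmetric[OF ZA ZB])
  also have "\<dots> = pd b (omega v vh a) t"
    by (rule pd_omega[OF t b, symmetric]) (simp add: T_def)
  finally show ?thesis .
qed

end

theorem theorem1:
  fixes Lx Lh :: tser and v vh :: "nat \<Rightarrow> times \<Rightarrow> complex"
  assumes L_form: "\<forall>t\<in>Tdom. fls_nth (Lx t) (-1) = 1 \<and> (\<forall>k < -1. fls_nth (Lx t) k = 0)"
    and Lh_form: "\<forall>t\<in>Tdom. fls_nth (Lh t) (-1) \<noteq> 0 \<and> (\<forall>k < -1. fls_nth (Lh t) k = 0)"
    and diff_L: "\<forall>k. pdifferentiable (\<lambda>t. fls_nth (Lx t) k)"
    and diff_Lh: "\<forall>k. pdifferentiable (\<lambda>t. fls_nth (Lh t) k)"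
    and diff_v: "\<forall>i. pdifferentiable (v i)"
    and diff_vh: "\<forall>i. pdifferentiable (vh i)"
    and Lax_L: "\<forall>a t k. 1 \<le> fst a + snd a \<longrightarrow> t \<in> Tdom \<longrightarrow>
                  pd a (\<lambda>s. fls_nth (Lx s) k) t = fls_nth (PBx (Hx Lx Lh a) Lx t) k"
    and Lax_M: "\<forall>a t k. 1 \<le> fst a + snd a \<longrightarrow> t \<in> Tdom \<longrightarrow>
                  pd a (\<lambda>s. fls_nth (Mx Lx v s) k) t = fls_nth (PBx (Hx Lx Lh a) (Mx Lx v) t) k"
    and Lax_Lh: "\<forall>a t k. 1 \<le> fst a + snd a \<longrightarrow> t \<in> Tdom \<longrightarrow>
                  pd a (\<lambda>s. fls_nth (Lh s) k) t = fls_nth (PBp (Hp Lx Lh a) Lh t) k"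
    and Lax_Mh: "\<forall>a t k. 1 \<le> fst a + snd a \<longrightarrow> t \<in> Tdom \<longrightarrow>
                  pd a (\<lambda>s. fls_nth (Mp Lh vh s) k) t = fls_nth (PBp (Hp Lx Lh a) (Mp Lh vh) t) k"
    and canon: "\<forall>t\<in>Tdom. PBx Lx (Mx Lx v) t = 1"
    and canon_h: "\<forall>t\<in>Tdom. PBp Lh (Mp Lh vh) t = 1"
  shows "\<forall>a b t. 2 \<le> fst a + snd a \<longrightarrow> 2 \<le> fst b + snd b \<longrightarrow> t \<in> Tdom \<longrightarrow>
           pd a (omega v vh b) t = pd b (omega v vh a) t"
proof -
  interpret dDS_solution Lx Lh v vh
    by (rule dDS_solution.intro) (fact assms)+
  show ?thesis using omega_closed by blast
qed

end
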